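(* Let $R$ be a commutative ring and $\mathcal{G}$ a Gabriel filter of finite type, and let $\sigma_\mathcal{G}$ and $T_\mathcal{G}=\operatorname{Coker}\sigma_\mathcal{G}$ be as constructed below. Then $T_\mathcal{G}$ is a silting module with respect to $\sigma_\mathcal{G}$, and $\operatorname{Gen}T_\mathcal{G}=\operatorname{Div}\mathcal{G}$.
   Context: A Gabriel filter is a filter $\mathcal{G}$ of ideals such that (i) $I\in\mathcal{G}$, $x\in R$ imply $(I:x)=\{r\mid xr\in I\}\in\mathcal{G}$, and (ii) if $J$ is an ideal and there is $I\in\mathcal{G}$ with $(J:x)\in\mathcal{G}$ for all $x\in I$, then $J\in\mathcal{G}$; it is of finite type if it has a filter basis of finitely generated ideals. $\operatorname{Div}\mathcal{G}=\{M\mid MI=M\ \forall I\in\mathcal{G}\}$. $\operatorname{Gen}T$: epimorphic images of direct sums of copies of $T$. For $\alpha:A\to B$, $\mathcal{D}_\alpha=\{X\mid\operatorname{Hom}_R(\alpha,X)\text{ surjective}\}$; $T$ is silting with respect to $\sigma:P_{-1}\to P_0$ ($P_i$ projective) if $T=\operatorname{Coker}\sigma$ and $\operatorname{Gen}T=\mathcal{D}_\sigma$. Construction: let $\mathcal{I}$ be the set of finitely generated ideals in $\mathcal{G}$, and for each $I\in\mathcal{I}$ fix generators $x^I_0,\dots,x^I_{n_I-1}$. Let $\Lambda$ be the set of all finite sequences of pairs $(I,k)$ with $I\in\mathcal{I}$, $0\le k<n_I$, including the empty sequence $w$; $\sqcup$ denotes concatenation. Let $F$ be free on basis $\Lambda$,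 $F'$ free on basis $\Lambda\setminus\{w\}$, $K$ free on basis $\Lambda\times\mathcal{I}$. Define $\varphi_\mathcal{G}:K\to F$ by $\varphi_\mathcal{G}((\lambda,I))=\lambda-\sum_{k<n_I}x^I_k(\lambda\sqcup(I,k))$, and $\varphi'_\mathcal{G}=p\circ\varphi_\mathcal{G}:K\to F'$ where $p:F\to F'$ is the projection killing the coordinate $w$. Let $\sigma_\mathcal{G}=\varphi_\mathcal{G}\oplus\varphi'_\mathcal{G}:K\oplus K\to F\oplus F'$ and $T_\mathcal{G}=\operatorname{Coker}\sigma_\mathcal{G}=\operatorname{Coker}\varphi_\mathcal{G}\oplus\operatorname{Coker}\varphi'_\mathcal{G}$. *)

theory Defs
  imports "HOL-Algebra.Module" "HOL-Algebra.Ideal"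
begin

definition colon_ideal :: "('a,'c) ring_scheme \<Rightarrow> 'a set \<Rightarrow> 'a \<Rightarrow> 'a set" where
  "colon_ideal R J x = {r \<in> carrier R. x \<otimes>\<^bsub>R\<^esub> r \<in> J}"

definition ideal_filter :: "('a,'c) ring_scheme \<Rightarrow> 'a set set \<Rightarrow> bool" where
  "ideal_filter R G \<longleftrightarrow> G \<noteq> {} \<and> (\<forall>I\<in>G. ideal I R)
     \<and> (\<forall>I\<in>G. \<forall>J. ideal J R \<and> I \<subseteq> J \<longrightarrow> J \<in> G)
     \<and> (\<forall>I\<in>G. \<forall>J\<in>G. I \<inter> J \<in> G)"

definition gabriel_filter :: "('a,'c) ring_scheme \<Rightarrow> 'a set set \<Rightarrow> bool" where
  "gabriel_filter R G \<longleftrightarrow> ideal_filter R G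
     \<and> (\<forall>I\<in>G. \<forall>x\<in>carrier R. colon_ideal R I x \<in> G)
     \<and> (\<forall>J I. ideal J R \<and> I \<in> G \<and> (\<forall>x\<in>I. colon_ideal R J x \<in> G) \<longrightarrow> J \<in> G)"

definition fin_gen_ideal :: "('a,'c) ring_scheme \<Rightarrow> 'a set \<Rightarrow> bool" where
  "fin_gen_ideal R I \<longleftrightarrow> (\<exists>S. finite S \<and> S \<subseteq> carrier R \<and> I = Idl\<^bsub>R\<^esub> S)"

definition finite_type :: "('a,'c) ring_scheme \<Rightarrow> 'a set set \<Rightarrow> bool" where
  "finite_type R G \<longleftrightarrow> (\<forall>J\<in>G. \<exists>I\<in>G. I \<subseteq> J \<and> fin_gen_ideal R I)"

definition mod_hom :: "('a,'c) ring_scheme \<Rightarrow> ('a,'m) module \<Rightarrow> ('a,'n) module \<Rightarrow> ('m \<Rightarrow> 'n) set" where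
  "mod_hom R M N = {f. (\<forall>x\<in>carrier M. f x \<in> carrier N)
     \<and> (\<forall>x\<in>carrier M. \<forall>y\<in>carrier M. f (x \<oplus>\<^bsub>M\<^esub> y) = f x \<oplus>\<^bsub>N\<^esub> f y)
     \<and> (\<forall>a\<in>carrier R. \<forall>x\<in>carrier M. f (a \<odot>\<^bsub>M\<^esub> x) = a \<odot>\<^bsub>N\<^esub> f x)}"

definition free_module :: "('a,'c) ring_scheme \<Rightarrow> 'b set \<Rightarrow> ('a, 'b \<Rightarrow> 'a) module" where
  "free_module R B = \<lparr>carrier = {f. (\<forall>b. f b \<in> carrier R) \<and> (\<forall>b. b \<notin> B \<longrightarrow> f b = \<zero>\<^bsub>R\<^esub>)
                                   \<and> finite {b. f b \<noteq> \<zero>\<^bsub>R\<^esub>}},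
                      mult = (\<lambda>f g. undefined), one = undefined,
                      zero = (\<lambda>b. \<zero>\<^bsub>R\<^esub>),
                      add = (\<lambda>f g b. f b \<oplus>\<^bsub>R\<^esub> g b),
                      smult = (\<lambda>a f b. a \<otimes>\<^bsub>R\<^esub> f b)\<rparr>"

definition fbasis :: "('a,'c) ring_scheme \<Rightarrow> 'b \<Rightarrow> ('b \<Rightarrow> 'a)" where
  "fbasis R b = (\<lambda>c. if c = b then \<one>\<^bsub>R\<^esub> else \<zero>\<^bsub>R\<^esub>)"

definition lin_ext :: "('a,'c) ring_scheme \<Rightarrow> ('a,'m) module \<Rightarrow> ('b \<Rightarrow> 'm) \<Rightarrow> ('b \<Rightarrow> 'a) \<Rightarrow> 'm" where
  "lin_ext R M v c = finsum M (\<lambda>b. c b \<odot>\<^bsub>M\<^esub> v b) {b. c b \<noteq> \<zero>\<^bsub>R\<^esub>}"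

definition dsum :: "('a,'m) module \<Rightarrow> ('a,'n) module \<Rightarrow> ('a, 'm \<times> 'n) module" where
  "dsum M N = \<lparr>carrier = carrier M \<times> carrier N,
               mult = (\<lambda>x y. undefined), one = undefined,
               zero = (\<zero>\<^bsub>M\<^esub>, \<zero>\<^bsub>N\<^esub>),
               add = (\<lambda>x y. (fst x \<oplus>\<^bsub>M\<^esub> fst y, snd x \<oplus>\<^bsub>N\<^esub> snd y)),
               smult = (\<lambda>a x. (a \<odot>\<^bsub>M\<^esub> fst x, a \<odot>\<^bsub>N\<^esub> snd x))\<rparr>"

definition copies :: "('a,'t) module \<Rightarrow> 'i set \<Rightarrow> ('a, 'i \<Rightarrow> 't) module" where
  "copies T I = \<lparr>carrier = {f. (\<forall>i. f i \<in> carrier T) \<and> (\<forall>i. i \<notin> I \<longrightarrow> f i = \<zero>\<^bsub>T\<^esub>)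
                                 \<and> finite {i. f i \<noteq> \<zero>\<^bsub>T\<^esub>}},
                 mult = (\<lambda>f g. undefined), one = undefined,
                 zero = (\<lambda>i. \<zero>\<^bsub>T\<^esub>),
                 add = (\<lambda>f g i. f i \<oplus>\<^bsub>T\<^esub> g i),
                 smult = (\<lambda>a f i. a \<odot>\<^bsub>T\<^esub> f i)\<rparr>"

text \<open>X is in Gen T: an epimorphic image of a direct sum of copies of T.  The index set is taken in
  the type of functions T \<Rightarrow> X, which is large enough (T^(Hom(T,X)) \<rightarrow> X).\<close>
definition Gen :: "('a,'c) ring_scheme \<Rightarrow> ('a,'t) module \<Rightarrow> ('a,'x) module \<Rightarrow> bool" where
  "Gen R T X \<longleftrightarrow> (\<exists>(I::('t \<Rightarrow> 'x) set) p. p \<in> mod_hom R (copies T I) X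
                     \<and> p ` carrier (copies T I) = carrier X)"

definition D_class :: "('a,'c) ring_scheme \<Rightarrow> ('a,'m) module \<Rightarrow> ('a,'n) module \<Rightarrow> ('m \<Rightarrow> 'n)
                        \<Rightarrow> ('a,'x) module \<Rightarrow> bool" where
  "D_class R A B \<alpha> X \<longleftrightarrow> (\<forall>g\<in>mod_hom R A X. \<exists>h\<in>mod_hom R B X. \<forall>a\<in>carrier A. h (\<alpha> a) = g a)"

definition mod_ideal_prod :: "('a,'c) ring_scheme \<Rightarrow> ('a,'x) module \<Rightarrow> 'a set \<Rightarrow> 'x set" where
  "mod_ideal_prod R X I = {y. \<exists>n is xs. (\<forall>j<n. is j \<in> I \<and> xs j \<in> carrier X)
                             \<and> y = finsum X (\<lambda>j. is j \<odot>\<^bsub>X\<^esub> xs j) {..<(n::nat)}}"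

definition Div :: "('a,'c) ring_scheme \<Rightarrow> 'a set set \<Rightarrow> ('a,'x) module \<Rightarrow> bool" where
  "Div R G X \<longleftrightarrow> (\<forall>I\<in>G. mod_ideal_prod R X I = carrier X)"

definition is_cokernel :: "('a,'c) ring_scheme \<Rightarrow> ('a,'m) module \<Rightarrow> ('a,'n) module \<Rightarrow> ('m \<Rightarrow> 'n)
                          \<Rightarrow> ('a,'t) module \<Rightarrow> ('n \<Rightarrow> 't) \<Rightarrow> bool" where
  "is_cokernel R A B \<alpha> T \<pi> \<longleftrightarrow> \<pi> \<in> mod_hom R B T \<and> \<pi> ` carrier B = carrier T
       \<and> {y \<in> carrier B. \<pi> y = \<zero>\<^bsub>T\<^esub>} = \<alpha> ` carrier A"

definition fgI :: "('a,'c) ring_scheme \<Rightarrow> 'a set set \<Rightarrow> 'a set set" where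
  "fgI R G = {I \<in> G. fin_gen_ideal R I}"

definition Lam :: "('a,'c) ring_scheme \<Rightarrow> 'a set set \<Rightarrow> ('a set \<Rightarrow> 'a list) \<Rightarrow> ('a set \<times> nat) list set" where
  "Lam R G gens = {l. \<forall>(I,k)\<in>set l. I \<in> fgI R G \<and> k < length (gens I)}"

definition FG where "FG R G gens = free_module R (Lam R G gens)"
definition FG' where "FG' R G gens = free_module R (Lam R G gens - {[]})"
definition KG where "KG R G gens = free_module R (Lam R G gens \<times> fgI R G)"

definition phi_basis where
  "phi_basis R G gens = (\<lambda>(l, I). fbasis R l \<ominus>\<^bsub>FG R G gens\<^esub>
      finsum (FG R G gens) (\<lambda>k. (gens I ! k) \<odot>\<^bsub>FG R G gens\<^esub> fbasis R (l @ [(I,k)])) {..<length (gens I)})"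

definition phiG where "phiG R G gens = lin_ext R (FG R G gens) (phi_basis R G gens)"

definition projw :: "('a,'c) ring_scheme \<Rightarrow> ('b list \<Rightarrow> 'a) \<Rightarrow> ('b list \<Rightarrow> 'a)" where
  "projw R f = f([] := \<zero>\<^bsub>R\<^esub>)"

definition phiG' where "phiG' R G gens = projw R \<circ> phiG R G gens"

definition sigmaG where
  "sigmaG R G gens = (\<lambda>(x, y). (phiG R G gens x, phiG' R G gens y))"

definition sigma_src where "sigma_src R G gens = dsum (KG R G gens) (KG R G gens)"
definition sigma_tgt where "sigma_tgt R G gens = dsum (FG R G gens) (FG' R G gens)"

end

theory Submission
  imports Defs
begin

text \<open>
  A homomorphism \<open>g\<close> out of \<open>K\<close> prescribes, for every sequence \<open>\<lambda>\<close> and every \<open>I\<close>, the value an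
  extension along \<open>\<phi>\<^sub>G\<close> must take on \<open>e\<^sub>\<lambda> - \<Sum>\<^sub>k x\<^sup>I\<^sub>k e\<^bsub>\<lambda>\<squnion>(I,k)\<^esub>\<close>. If \<open>X = XI\<close> for all finitely
  generated \<open>I \<in> G\<close>, the values on the basis of \<open>F\<close> can be chosen recursively along the tree of
  sequences, starting from an arbitrary value at the root \<open>w\<close>: the residue still to be produced is
  a combination of the generators of \<open>I\<close>, and its coefficients become the values one level down.
  Conversely, extending the map that reads off the \<open>(w,I)\<close>-coordinate of the second copy of \<open>K\<close>,
  whose image in \<open>F'\<close> has lost its \<open>w\<close>-term, writes every element of \<open>X\<close> as an element of \<open>XI\<close>.
  So \<open>Div G = D\<^sub>\<sigma>\<close>. In \<open>T\<^sub>G\<close> the relations say that every basis vector lies in \<open>T\<^sub>GI\<close>, so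
  \<open>T\<^sub>G \<in> Div G\<close>, and \<open>Div G\<close> is closed under direct sums and quotients. Finally, for \<open>x\<close> in a
  divisible \<open>X\<close>, extending the zero map with value \<open>x\<close> at \<open>e\<^sub>w\<close> gives a map vanishing on the image
  of \<open>\<sigma>\<^sub>G\<close>; it factors through \<open>T\<^sub>G\<close> and hits \<open>x\<close>, so \<open>X \<in> Gen T\<^sub>G\<close>.
\<close>

section \<open>Modules of finitely supported functions and direct sums\<close>

lemma free_module_carrier:
  "f \<in> carrier (free_module R B) \<longleftrightarrow> (\<forall>b. f b \<in> carrier R) \<and> (\<forall>b. b \<notin> B \<longrightarrow> f b = \<zero>\<^bsub>R\<^esub>)
                                   \<and> finite {b. f b \<noteq> \<zero>\<^bsub>R\<^esub>}"
  by (simp add: free_module_def)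

lemma free_module_ops [simp]:
  "\<zero>\<^bsub>free_module R B\<^esub> = (\<lambda>b. \<zero>\<^bsub>R\<^esub>)"
  "f \<oplus>\<^bsub>free_module R B\<^esub> g = (\<lambda>b. f b \<oplus>\<^bsub>R\<^esub> g b)"
  "a \<odot>\<^bsub>free_module R B\<^esub> f = (\<lambda>b. a \<otimes>\<^bsub>R\<^esub> f b)"
  by (simp_all add: free_module_def)

lemma free_module_module:
  fixes R (structure)
  assumes "cring R"
  shows "module R (free_module R B)"
proof -
  interpret cring R by fact
  have fin_add: "finite {b. f b \<oplus> g b \<noteq> \<zero>}" if "finite {b. f b \<noteq> \<zero>}" "finite {b. g b \<noteq> \<zero>}" for f g
    by (rule finite_subset[of _ "{b. f b \<noteq> \<zero>} \<union> {b. g b \<noteq> \<zero>}"]) (use that in auto)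
  have fin_smult: "finite {b. a \<otimes> f b \<noteq> \<zero>}"
    if "finite {b. f b \<noteq> \<zero>}" "a \<in> carrier R" "\<forall>b. f b \<in> carrier R" for f a
    by (rule finite_subset[of _ "{b. f b \<noteq> \<zero>}"]) (use that in auto)
  show ?thesis
  proof (rule moduleI[OF assms], rule abelian_groupI)
    fix x assume x: "x \<in> carrier (free_module R B)"
    have "{b. \<ominus> x b \<noteq> \<zero>} = {b. x b \<noteq> \<zero>}"
      using x by (auto simp: free_module_carrier)
    with x show "\<exists>y\<in>carrier (free_module R B). y \<oplus>\<^bsub>free_module R B\<^esub> x = \<zero>\<^bsub>free_module R B\<^esub>"
      by (intro bexI[of _ "\<lambda>b. \<ominus> x b"]) (auto simp: free_module_carrier l_neg)
  qed (auto simp: free_module_carrier fin_add fin_smult a_ac l_distr r_distr m_assoc)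
qed

lemma copies_carrier:
  "f \<in> carrier (copies T I) \<longleftrightarrow> (\<forall>i. f i \<in> carrier T) \<and> (\<forall>i. i \<notin> I \<longrightarrow> f i = \<zero>\<^bsub>T\<^esub>)
                                 \<and> finite {i. f i \<noteq> \<zero>\<^bsub>T\<^esub>}"
  by (simp add: copies_def)

lemma copies_ops [simp]:
  "\<zero>\<^bsub>copies T I\<^esub> = (\<lambda>i. \<zero>\<^bsub>T\<^esub>)"
  "f \<oplus>\<^bsub>copies T I\<^esub> g = (\<lambda>i. f i \<oplus>\<^bsub>T\<^esub> g i)"
  "a \<odot>\<^bsub>copies T I\<^esub> f = (\<lambda>i. a \<odot>\<^bsub>T\<^esub> f i)"
  by (simp_all add: copies_def)

lemma copies_module:
  fixes R (structure)
  assumes "module R T"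
  shows "module R (copies T I)"
proof -
  interpret module R T by fact
  have fin_add: "finite {i. f i \<oplus>\<^bsub>T\<^esub> g i \<noteq> \<zero>\<^bsub>T\<^esub>}"
    if "finite {i. f i \<noteq> \<zero>\<^bsub>T\<^esub>}" "finite {i. g i \<noteq> \<zero>\<^bsub>T\<^esub>}" for f g
    by (rule finite_subset[of _ "{i. f i \<noteq> \<zero>\<^bsub>T\<^esub>} \<union> {i. g i \<noteq> \<zero>\<^bsub>T\<^esub>}"]) (use that in auto)
  have fin_smult: "finite {i. a \<odot>\<^bsub>T\<^esub> f i \<noteq> \<zero>\<^bsub>T\<^esub>}"
    if "finite {i. f i \<noteq> \<zero>\<^bsub>T\<^esub>}" "a \<in> carrier R" "\<forall>i. f i \<in> carrier T" for f a
    by (rule finite_subset[of _ "{i. f i \<noteq> \<zero>\<^bsub>T\<^esub>}"]) (use that in auto)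
  show ?thesis
  proof (rule moduleI[OF is_cring], rule abelian_groupI)
    fix x assume x: "x \<in> carrier (copies T I)"
    have "{i. \<ominus>\<^bsub>T\<^esub> x i \<noteq> \<zero>\<^bsub>T\<^esub>} = {i. x i \<noteq> \<zero>\<^bsub>T\<^esub>}"
      using x by (auto simp: copies_carrier)
    with x show "\<exists>y\<in>carrier (copies T I). y \<oplus>\<^bsub>copies T I\<^esub> x = \<zero>\<^bsub>copies T I\<^esub>"
      by (intro bexI[of _ "\<lambda>i. \<ominus>\<^bsub>T\<^esub> x i"]) (auto simp: copies_carrier M.l_neg)
  qed (auto simp: copies_carrier fin_add fin_smult M.a_ac smult_l_distr smult_r_distr smult_assoc1)
qed

lemma dsum_carrier [simp]: "carrier (dsum M N) = carrier M \<times> carrier N"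
  by (simp add: dsum_def)

lemma dsum_ops [simp]:
  "\<zero>\<^bsub>dsum M N\<^esub> = (\<zero>\<^bsub>M\<^esub>, \<zero>\<^bsub>N\<^esub>)"
  "x \<oplus>\<^bsub>dsum M N\<^esub> y = (fst x \<oplus>\<^bsub>M\<^esub> fst y, snd x \<oplus>\<^bsub>N\<^esub> snd y)"
  "a \<odot>\<^bsub>dsum M N\<^esub> x = (a \<odot>\<^bsub>M\<^esub> fst x, a \<odot>\<^bsub>N\<^esub> snd x)"
  by (simp_all add: dsum_def)

lemma dsum_module:
  fixes R (structure)
  assumes "module R M" and "module R N"
  shows "module R (dsum M N)"
proof -
  interpret M: module R M by fact
  interpret N: module R N by fact
  show ?thesis
  proof (rule moduleI[OF M.is_cring], rule abelian_groupI)
    fix x assume "x \<in> carrier (dsum M N)"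
    then show "\<exists>y\<in>carrier (dsum M N). y \<oplus>\<^bsub>dsum M N\<^esub> x = \<zero>\<^bsub>dsum M N\<^esub>"
      by (intro bexI[of _ "(\<ominus>\<^bsub>M\<^esub> fst x, \<ominus>\<^bsub>N\<^esub> snd x)"]) (auto simp: M.l_neg N.l_neg)
  qed (auto simp: M.a_ac N.a_ac M.smult_l_distr M.smult_r_distr M.smult_assoc1
        N.smult_l_distr N.smult_r_distr N.smult_assoc1)
qed

lemma module_trivial:
  fixes R (structure)
  assumes "module R M" and "\<one> = \<zero>" and "x \<in> carrier M"
  shows "x = \<zero>\<^bsub>M\<^esub>"
proof -
  interpret module R M by fact
  have "x = \<one> \<odot>\<^bsub>M\<^esub> x" using assms(3) by simp
  also have "\<dots> = \<zero>\<^bsub>M\<^esub>" using assms(2,3) by simp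
  finally show ?thesis .
qed


section \<open>Module homomorphisms\<close>

lemma mod_homD:
  assumes "f \<in> mod_hom R M N"
  shows "x \<in> carrier M \<Longrightarrow> f x \<in> carrier N"
    and "x \<in> carrier M \<Longrightarrow> y \<in> carrier M \<Longrightarrow> f (x \<oplus>\<^bsub>M\<^esub> y) = f x \<oplus>\<^bsub>N\<^esub> f y"
    and "a \<in> carrier R \<Longrightarrow> x \<in> carrier M \<Longrightarrow> f (a \<odot>\<^bsub>M\<^esub> x) = a \<odot>\<^bsub>N\<^esub> f x"
  using assms by (auto simp: mod_hom_def)

lemma mod_homI:
  assumes "\<And>x. x \<in> carrier M \<Longrightarrow> f x \<in> carrier N"
    and "\<And>x y. x \<in> carrier M \<Longrightarrow> y \<in> carrier M \<Longrightarrow> f (x \<oplus>\<^bsub>M\<^esub> y) = f x \<oplus>\<^bsub>N\<^esub> f y"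
    and "\<And>a x. a \<in> carrier R \<Longrightarrow> x \<in> carrier M \<Longrightarrow> f (a \<odot>\<^bsub>M\<^esub> x) = a \<odot>\<^bsub>N\<^esub> f x"
  shows "f \<in> mod_hom R M N"
  using assms by (auto simp: mod_hom_def)

lemma mod_hom_comp: "f \<in> mod_hom R M N \<Longrightarrow> g \<in> mod_hom R N P \<Longrightarrow> g \<circ> f \<in> mod_hom R M P"
  by (auto simp: mod_hom_def)

lemma mod_hom_zero:
  fixes R (structure)
  assumes "module R M" and "module R N" and f: "f \<in> mod_hom R M N"
  shows "f \<zero>\<^bsub>M\<^esub> = \<zero>\<^bsub>N\<^esub>"
proof -
  interpret M: module R M by fact
  interpret N: module R N by fact
  have "f \<zero>\<^bsub>M\<^esub> = f (\<zero> \<odot>\<^bsub>M\<^esub> \<zero>\<^bsub>M\<^esub>)" by simp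
  also have "\<dots> = \<zero> \<odot>\<^bsub>N\<^esub> f \<zero>\<^bsub>M\<^esub>" using mod_homD(3)[OF f, of \<zero> "\<zero>\<^bsub>M\<^esub>"] by simp
  finally show ?thesis using mod_homD(1)[OF f] by simp
qed

lemma (in abelian_group) eq_if_minus_eq_zero:
  "x \<in> carrier G \<Longrightarrow> y \<in> carrier G \<Longrightarrow> x \<ominus> y = \<zero> \<Longrightarrow> x = y"
  by (metis minus_eq minus_equality minus_minus a_inv_closed)

lemma mod_hom_minus:
  fixes R (structure)
  assumes "module R M" and "module R N" and f: "f \<in> mod_hom R M N"
    and x: "x \<in> carrier M" and y: "y \<in> carrier M"
  shows "f (x \<ominus>\<^bsub>M\<^esub> y) = f x \<ominus>\<^bsub>N\<^esub> f y"
proof -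
  interpret M: module R M by fact
  interpret N: module R N by fact
  have "f (\<ominus>\<^bsub>M\<^esub> y) = f ((\<ominus> \<one>) \<odot>\<^bsub>M\<^esub> y)" using y by (simp add: M.smult_l_minus)
  also have "\<dots> = \<ominus>\<^bsub>N\<^esub> f y" using y mod_homD[OF f] by (simp add: N.smult_l_minus)
  finally show ?thesis using x y mod_homD[OF f] by (simp add: M.minus_eq N.minus_eq)
qed

lemma mod_hom_finsum:
  fixes R (structure)
  assumes "module R M" and "module R N" and f: "f \<in> mod_hom R M N"
    and "finite A" and "g \<in> A \<rightarrow> carrier M"
  shows "f (finsum M g A) = finsum N (\<lambda>i. f (g i)) A"
proof -
  interpret M: module R M by fact
  interpret N: module R N by fact
  show ?thesis
    using assms(4,5)
  proof (induct A rule: finite_induct)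
    case empty
    then show ?case using mod_hom_zero[OF assms(1-3)] by simp
  next
    case (insert a A)
    then show ?case
      using mod_homD[OF f] M.finsum_closed by (simp add: M.finsum_insert N.finsum_insert Pi_def)
  qed
qed

lemma mod_hom_dsum_inl:
  fixes R (structure)
  assumes "module R N"
  shows "(\<lambda>x. (x, \<zero>\<^bsub>N\<^esub>)) \<in> mod_hom R M (dsum M N)"
proof -
  interpret module R N by fact
  show ?thesis by (rule mod_homI) simp_all
qed

lemma mod_hom_dsum_inr:
  fixes R (structure)
  assumes "module R M"
  shows "(\<lambda>y. (\<zero>\<^bsub>M\<^esub>, y)) \<in> mod_hom R N (dsum M N)"
proof -
  interpret module R M by fact
  show ?thesis by (rule mod_homI) simp_all
qed

lemma mod_hom_dsum_case:
  fixes R (structure)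
  assumes "module R X" and f: "f \<in> mod_hom R M X" and g: "g \<in> mod_hom R N X"
  shows "(\<lambda>p. f (fst p) \<oplus>\<^bsub>X\<^esub> g (snd p)) \<in> mod_hom R (dsum M N) X"
proof -
  interpret module R X by fact
  show ?thesis
    by (rule mod_homI) (auto simp: mod_homD[OF f] mod_homD[OF g] a_ac smult_r_distr)
qed


section \<open>Linear extension from a basis\<close>

lemma finite_support_induct [consumes 1, case_names zero update]:
  assumes fin: "finite {b. f b \<noteq> z}"
    and zero: "P (\<lambda>_. z)"
    and update: "\<And>g b. (\<And>c. g c \<noteq> z \<Longrightarrow> g c = f c) \<Longrightarrow> g b = z \<Longrightarrow> f b \<noteq> z \<Longrightarrow> P g
                   \<Longrightarrow> P (g(b := f b))"
  shows "P f"
proof -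
  have "P (\<lambda>c. if c \<in> S then f c else z)" if "finite S" "S \<subseteq> {b. f b \<noteq> z}" for S
    using that
  proof (induct S rule: finite_induct)
    case empty
    then show ?case using zero by simp
  next
    case (insert b S)
    have "P ((\<lambda>c. if c \<in> S then f c else z)(b := f b))"
      by (rule update) (use insert in auto)
    moreover have "(\<lambda>c. if c \<in> S then f c else z)(b := f b) = (\<lambda>c. if c \<in> insert b S then f c else z)"
      by auto
    ultimately show ?case by simp
  qed
  moreover have "(\<lambda>c. if c \<in> {b. f b \<noteq> z} then f c else z) = f"
    by auto
  ultimately show ?thesis
    using fin by (metis order_refl)
qed

lemma fbasis_carrier:
  fixes R (structure)
  assumes "cring R" and "b \<in> B"
  shows "fbasis R b \<in> carrier (free_module R B)"
proof -
  interpret cring R by fact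
  have "{c. fbasis R b c \<noteq> \<zero>} \<subseteq> {b}" by (auto simp: fbasis_def)
  then have "finite {c. fbasis R b c \<noteq> \<zero>}" by (rule finite_subset) simp
  then show ?thesis using assms(2) by (auto simp: free_module_carrier fbasis_def)
qed

lemma free_module_induct [consumes 2, case_names zero add]:
  fixes R (structure)
  assumes "cring R" and f: "f \<in> carrier (free_module R B)"
    and zero: "P (\<lambda>b. \<zero>)"
    and add: "\<And>g b a. g \<in> carrier (free_module R B) \<Longrightarrow> b \<in> B \<Longrightarrow> a \<in> carrier R \<Longrightarrow> P g
        \<Longrightarrow> P (a \<odot>\<^bsub>free_module R B\<^esub> fbasis R b \<oplus>\<^bsub>free_module R B\<^esub> g)"
  shows "P f"
proof -
  interpret cring R by fact
  have f_carrier: "\<And>c. f c \<in> carrier R" and f_B: "\<And>c. c \<notin> B \<Longrightarrow> f c = \<zero>"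
    and fin: "finite {b. f b \<noteq> \<zero>}"
    using f by (auto simp: free_module_carrier)
  from fin show ?thesis
  proof (induct f rule: finite_support_induct)
    case (update g b)
    have "{c. g c \<noteq> \<zero>} \<subseteq> {c. f c \<noteq> \<zero>}" using update(1) by auto
    then have "finite {c. g c \<noteq> \<zero>}" using fin by (rule finite_subset)
    moreover have g_carrier: "g c \<in> carrier R" for c
      using update(1)[of c] f_carrier[of c] by (cases "g c = \<zero>") auto
    moreover have "g c = \<zero>" if "c \<notin> B" for c
      using update(1)[of c] f_B[OF that] by auto
    ultimately have g: "g \<in> carrier (free_module R B)" by (simp add: free_module_carrier)
    have b: "b \<in> B" using update(3) f_B by blast
    have "g(b := f b) = f b \<odot>\<^bsub>free_module R B\<^esub> fbasis R b \<oplus>\<^bsub>free_module R B\<^esub> g"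
      using update(2) f_carrier g_carrier by (auto simp: fbasis_def)
    then show ?case using add[OF g b f_carrier update(4)] by simp
  qed (use zero in simp)
qed

lemma lin_ext_superset:
  fixes R (structure)
  assumes "module R M" and c: "c \<in> carrier (free_module R B)"
    and "finite A" and "{b. c b \<noteq> \<zero>} \<subseteq> A" and "v ` A \<subseteq> carrier M"
  shows "lin_ext R M v c = finsum M (\<lambda>b. c b \<odot>\<^bsub>M\<^esub> v b) A"
proof -
  interpret module R M by fact
  show ?thesis unfolding lin_ext_def
    by (rule add.finprod_mono_neutral_cong_left) (use assms in \<open>auto simp: free_module_carrier\<close>)
qed

lemma lin_ext_hom:
  fixes R (structure)
  assumes "module R M" and v: "v ` B \<subseteq> carrier M"
  shows "lin_ext R M v \<in> mod_hom R (free_module R B) M"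
proof -
  interpret M: module R M by fact
  interpret F: module R "free_module R B" by (rule free_module_module[OF M.is_cring])
  let ?S = "\<lambda>c. {b. c b \<noteq> \<zero>}"
  have supp: "finite (?S c)" "?S c \<subseteq> B" "\<And>b. c b \<in> carrier R" if "c \<in> carrier (free_module R B)" for c
    using that by (auto simp: free_module_carrier)
  show ?thesis
  proof (rule mod_homI)
    fix x assume x: "x \<in> carrier (free_module R B)"
    show "lin_ext R M v x \<in> carrier M" unfolding lin_ext_def
      by (rule M.finsum_closed) (use v supp[OF x] in auto)
  next
    fix x y assume x: "x \<in> carrier (free_module R B)" and y: "y \<in> carrier (free_module R B)"
    let ?A = "?S x \<union> ?S y"
    have A: "finite ?A" "v ` ?A \<subseteq> carrier M"
      using supp(1,2)[OF x] supp(1,2)[OF y] v by auto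
    note ext = lin_ext_superset[OF assms(1) _ A(1) _ A(2)]
    have "lin_ext R M v (x \<oplus>\<^bsub>free_module R B\<^esub> y) = finsum M (\<lambda>b. (x b \<oplus> y b) \<odot>\<^bsub>M\<^esub> v b) ?A"
      by (subst ext) (use F.a_closed[OF x y] supp[OF x] supp[OF y] v in \<open>auto simp: image_subset_iff\<close>)
    also have "\<dots> = finsum M (\<lambda>b. x b \<odot>\<^bsub>M\<^esub> v b \<oplus>\<^bsub>M\<^esub> y b \<odot>\<^bsub>M\<^esub> v b) ?A"
      by (rule M.finsum_cong') (use A supp[OF x] supp[OF y] in \<open>auto simp: M.smult_l_distr\<close>)
    also have "\<dots> = finsum M (\<lambda>b. x b \<odot>\<^bsub>M\<^esub> v b) ?A \<oplus>\<^bsub>M\<^esub> finsum M (\<lambda>b. y b \<odot>\<^bsub>M\<^esub> v b) ?A"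
      by (rule M.finsum_addf) (use A supp[OF x] supp[OF y] in auto)
    also have "\<dots> = lin_ext R M v x \<oplus>\<^bsub>M\<^esub> lin_ext R M v y"
      by (subst (1 2) ext) (use x y supp[OF x] supp[OF y] v in force)+
    finally show "lin_ext R M v (x \<oplus>\<^bsub>free_module R B\<^esub> y) = lin_ext R M v x \<oplus>\<^bsub>M\<^esub> lin_ext R M v y" .
  next
    fix a x assume a: "a \<in> carrier R" and x: "x \<in> carrier (free_module R B)"
    have A: "finite (?S x)" "v ` ?S x \<subseteq> carrier M" using supp[OF x] v by auto
    have "lin_ext R M v (a \<odot>\<^bsub>free_module R B\<^esub> x) = finsum M (\<lambda>b. (a \<otimes> x b) \<odot>\<^bsub>M\<^esub> v b) (?S x)"
      by (subst lin_ext_superset[OF assms(1) _ A(1) _ A(2)]) (use F.smult_closed[OF a x] supp[OF x] a in auto)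
    also have "\<dots> = finsum M (\<lambda>b. a \<odot>\<^bsub>M\<^esub> (x b \<odot>\<^bsub>M\<^esub> v b)) (?S x)"
      by (rule M.finsum_cong') (use A supp[OF x] a in \<open>auto simp: M.smult_assoc1\<close>)
    also have "\<dots> = a \<odot>\<^bsub>M\<^esub> lin_ext R M v x"
      unfolding lin_ext_def by (rule M.finsum_smult_ldistr[symmetric]) (use A supp[OF x] a in auto)
    finally show "lin_ext R M v (a \<odot>\<^bsub>free_module R B\<^esub> x) = a \<odot>\<^bsub>M\<^esub> lin_ext R M v x" .
  qed
qed

lemma lin_ext_fbasis:
  fixes R (structure)
  assumes "module R M" and "v b \<in> carrier M"
  shows "lin_ext R M v (fbasis R b) = v b"
proof -
  interpret module R M by fact
  show ?thesis
  proof (cases "\<one> = \<zero>")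
    case True
    then have "{c. fbasis R b c \<noteq> \<zero>} = {}" by (simp add: fbasis_def)
    then show ?thesis using module_trivial[OF assms(1) True assms(2)] by (simp add: lin_ext_def)
  next
    case False
    then have "{c. fbasis R b c \<noteq> \<zero>} = {b}" by (auto simp: fbasis_def)
    then show ?thesis using assms(2) by (simp add: lin_ext_def fbasis_def)
  qed
qed

lemma free_module_hom_ext:
  fixes R (structure)
  assumes "module R M"
    and f: "f \<in> mod_hom R (free_module R B) M" and g: "g \<in> mod_hom R (free_module R B) M"
    and basis: "\<And>b. b \<in> B \<Longrightarrow> f (fbasis R b) = g (fbasis R b)"
    and x: "x \<in> carrier (free_module R B)"
  shows "f x = g x"
proof -
  interpret M: module R M by fact
  interpret F: module R "free_module R B" by (rule free_module_module[OF M.is_cring])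
  from M.is_cring x show ?thesis
  proof (induct x rule: free_module_induct)
    case zero
    then show ?case
      using mod_hom_zero[OF F.module_axioms assms(1) f] mod_hom_zero[OF F.module_axioms assms(1) g] by simp
  next
    case (add y b a)
    have "a \<odot>\<^bsub>free_module R B\<^esub> fbasis R b \<in> carrier (free_module R B)"
      by (rule F.smult_closed[OF add(3) fbasis_carrier[OF M.is_cring add(2)]])
    then show ?case
      using add fbasis_carrier[OF M.is_cring add(2)] basis[OF add(2)] mod_homD[OF f] mod_homD[OF g]
      by simp
  qed
qed

lemma submodule_zero_closed:
  "submodule N R M \<Longrightarrow> \<zero>\<^bsub>M\<^esub> \<in> N"
  using subgroup.one_closed[OF submodule.axioms(1)] by fastforce

lemma submodule_add_closed:
  "submodule N R M \<Longrightarrow> x \<in> N \<Longrightarrow> y \<in> N \<Longrightarrow> x \<oplus>\<^bsub>M\<^esub> y \<in> N"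
  using subgroup.m_closed[OF submodule.axioms(1)] by fastforce

lemma free_module_hom_into_submodule:
  fixes R (structure)
  assumes "module R M" and h: "h \<in> mod_hom R (free_module R B) M" and N: "submodule N R M"
    and basis: "\<And>b. b \<in> B \<Longrightarrow> h (fbasis R b) \<in> N"
    and x: "x \<in> carrier (free_module R B)"
  shows "h x \<in> N"
proof -
  interpret M: module R M by fact
  interpret F: module R "free_module R B" by (rule free_module_module[OF M.is_cring])
  from M.is_cring x show ?thesis
  proof (induct x rule: free_module_induct)
    case zero
    then show ?case using mod_hom_zero[OF F.module_axioms assms(1) h] submodule_zero_closed[OF N] by simp
  next
    case (add g b a)
    have "a \<odot>\<^bsub>free_module R B\<^esub> fbasis R b \<in> carrier (free_module R B)"
      by (rule F.smult_closed[OF add(3) fbasis_carrier[OF M.is_cring add(2)]])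
    then show ?case
      using add fbasis_carrier[OF M.is_cring add(2)] basis[OF add(2)] mod_homD[OF h]
        submodule.smult_closed[OF N] submodule_add_closed[OF N] by simp
  qed
qed

definition single :: "('a,'t) module \<Rightarrow> 'i \<Rightarrow> 't \<Rightarrow> ('i \<Rightarrow> 't)" where
  "single T i t = (\<lambda>j. if j = i then t else \<zero>\<^bsub>T\<^esub>)"

lemma single_hom:
  fixes R (structure)
  assumes "module R T" and "i \<in> I"
  shows "single T i \<in> mod_hom R T (copies T I)"
proof -
  interpret module R T by fact
  show ?thesis
  proof (rule mod_homI)
    fix t assume t: "t \<in> carrier T"
    have "{j. single T i t j \<noteq> \<zero>\<^bsub>T\<^esub>} \<subseteq> {i}" by (auto simp: single_def)
    then show "single T i t \<in> carrier (copies T I)" using t assms(2)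
      by (auto simp: copies_carrier single_def intro: finite_subset)
  qed (auto simp: single_def)
qed

lemma copies_hom_into_submodule:
  fixes R (structure)
  assumes T: "module R T" and "module R X" and p: "p \<in> mod_hom R (copies T I) X" and N: "submodule N R X"
    and singles: "\<And>i t. i \<in> I \<Longrightarrow> t \<in> carrier T \<Longrightarrow> p (single T i t) \<in> N"
    and f: "f \<in> carrier (copies T I)"
  shows "p f \<in> N"
proof -
  interpret T: module R T by fact
  interpret C: module R "copies T I" by (rule copies_module[OF T])
  have f_carrier: "\<And>i. f i \<in> carrier T" and f_I: "\<And>i. i \<notin> I \<Longrightarrow> f i = \<zero>\<^bsub>T\<^esub>"
    and fin: "finite {i. f i \<noteq> \<zero>\<^bsub>T\<^esub>}"
    using f by (auto simp: copies_carrier)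
  from fin show ?thesis
  proof (induct f rule: finite_support_induct)
    case zero
    then show ?case
      using mod_hom_zero[OF C.module_axioms assms(2) p] submodule_zero_closed[OF N] by simp
  next
    case (update g i)
    have "{j. g j \<noteq> \<zero>\<^bsub>T\<^esub>} \<subseteq> {j. f j \<noteq> \<zero>\<^bsub>T\<^esub>}" using update(1) by auto
    then have "finite {j. g j \<noteq> \<zero>\<^bsub>T\<^esub>}" using fin by (rule finite_subset)
    then have g: "g \<in> carrier (copies T I)"
      using update(1) f_carrier f_I unfolding copies_carrier by (metis T.zero_closed)
    have i: "i \<in> I" using update(3) f_I by blast
    have single: "single T i (f i) \<in> carrier (copies T I)"
      by (rule mod_homD(1)[OF single_hom[OF T i] f_carrier])
    have "g(i := f i) = single T i (f i) \<oplus>\<^bsub>copies T I\<^esub> g"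
      using update(2) f_carrier g by (auto simp: single_def copies_carrier)
    then show ?case
      using mod_homD(2)[OF p single g] singles[OF i f_carrier] update(4) submodule_add_closed[OF N] by simp
  qed
qed


section \<open>The submodule \<open>XI\<close>\<close>

lemma mod_ideal_prod_sum:
  assumes "\<forall>j<(n::nat). cs j \<in> I \<and> xs j \<in> carrier X"
  shows "finsum X (\<lambda>j. cs j \<odot>\<^bsub>X\<^esub> xs j) {..<n} \<in> mod_ideal_prod R X I"
  unfolding mod_ideal_prod_def using assms by blast

lemma mod_ideal_prod_zero:
  fixes R (structure)
  assumes "module R X"
  shows "\<zero>\<^bsub>X\<^esub> \<in> mod_ideal_prod R X I"
proof -
  interpret module R X by fact
  show ?thesis using mod_ideal_prod_sum[where n=0 and I=I and X=X and R=R] by simp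
qed

lemma mod_ideal_prod_step:
  fixes R (structure)
  assumes "module R X" and I: "I \<subseteq> carrier R"
    and y: "y \<in> mod_ideal_prod R X I" and i: "i \<in> I" and x: "x \<in> carrier X"
  shows "i \<odot>\<^bsub>X\<^esub> x \<oplus>\<^bsub>X\<^esub> y \<in> mod_ideal_prod R X I"
proof -
  interpret module R X by fact
  obtain n cs xs where h: "\<forall>j<(n::nat). cs j \<in> I \<and> xs j \<in> carrier X"
    and y_eq: "y = finsum X (\<lambda>j. cs j \<odot>\<^bsub>X\<^esub> xs j) {..<n}"
    using y unfolding mod_ideal_prod_def by blast
  let ?cs = "cs(n := i)" and ?xs = "xs(n := x)"
  have h': "\<forall>j<Suc n. ?cs j \<in> I \<and> ?xs j \<in> carrier X" using h i x by auto
  have terms: "(\<lambda>j. ?cs j \<odot>\<^bsub>X\<^esub> ?xs j) \<in> {..<n} \<rightarrow> carrier X"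
    using h I by (auto intro!: smult_closed simp: subset_iff)
  have "finsum X (\<lambda>j. ?cs j \<odot>\<^bsub>X\<^esub> ?xs j) {..<Suc n} = i \<odot>\<^bsub>X\<^esub> x \<oplus>\<^bsub>X\<^esub> finsum X (\<lambda>j. ?cs j \<odot>\<^bsub>X\<^esub> ?xs j) {..<n}"
    unfolding lessThan_Suc using terms i x I by (subst finsum_insert) auto
  also have "finsum X (\<lambda>j. ?cs j \<odot>\<^bsub>X\<^esub> ?xs j) {..<n} = y"
    unfolding y_eq by (rule finsum_cong') (use h I in \<open>auto intro!: smult_closed simp: subset_iff\<close>)
  finally show ?thesis using mod_ideal_prod_sum[OF h'] by simp
qed

lemma mod_ideal_prod_induct [consumes 3, case_names zero step]:
  fixes R (structure)
  assumes X: "module R X" and I: "I \<subseteq> carrier R"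
    and y: "y \<in> mod_ideal_prod R X I"
    and zero: "P \<zero>\<^bsub>X\<^esub>"
    and step: "\<And>i x y. i \<in> I \<Longrightarrow> x \<in> carrier X \<Longrightarrow> y \<in> mod_ideal_prod R X I \<Longrightarrow> P y
               \<Longrightarrow> P (i \<odot>\<^bsub>X\<^esub> x \<oplus>\<^bsub>X\<^esub> y)"
  shows "P y"
proof -
  interpret module R X by fact
  obtain n cs xs where h: "\<forall>j<(n::nat). cs j \<in> I \<and> xs j \<in> carrier X"
    and y_eq: "y = finsum X (\<lambda>j. cs j \<odot>\<^bsub>X\<^esub> xs j) {..<n}"
    using y unfolding mod_ideal_prod_def by blast
  from h have "P (finsum X (\<lambda>j. cs j \<odot>\<^bsub>X\<^esub> xs j) {..<n})"
  proof (induct n)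
    case 0
    then show ?case using zero by simp
  next
    case (Suc n)
    have terms: "(\<lambda>j. cs j \<odot>\<^bsub>X\<^esub> xs j) \<in> {..<n} \<rightarrow> carrier X"
      using Suc(2) I by (auto intro!: smult_closed simp: subset_iff)
    have "finsum X (\<lambda>j. cs j \<odot>\<^bsub>X\<^esub> xs j) {..<Suc n} =
          cs n \<odot>\<^bsub>X\<^esub> xs n \<oplus>\<^bsub>X\<^esub> finsum X (\<lambda>j. cs j \<odot>\<^bsub>X\<^esub> xs j) {..<n}"
      unfolding lessThan_Suc using terms Suc(2) I by (subst finsum_insert) auto
    then show ?case
      using Suc step[of "cs n" "xs n"] mod_ideal_prod_sum[where n=n and cs=cs and I=I and xs=xs and X=X and R=R]
      by simp
  qed
  then show ?thesis using y_eq by simp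
qed

lemma mod_ideal_prod_subset_carrier:
  fixes R (structure)
  assumes "module R X" and I: "I \<subseteq> carrier R"
  shows "mod_ideal_prod R X I \<subseteq> carrier X"
proof
  interpret module R X by fact
  fix y assume "y \<in> mod_ideal_prod R X I"
  with assms show "y \<in> carrier X"
    by (induct y rule: mod_ideal_prod_induct) (auto intro: subsetD[OF I])
qed

lemma mod_ideal_prod_add:
  fixes R (structure)
  assumes "module R X" and I: "I \<subseteq> carrier R"
    and y: "y \<in> mod_ideal_prod R X I" and z: "z \<in> mod_ideal_prod R X I"
  shows "y \<oplus>\<^bsub>X\<^esub> z \<in> mod_ideal_prod R X I"
  using assms(1,2) y
proof (induct y rule: mod_ideal_prod_induct)
  case zero
  interpret module R X by fact
  show ?case using z mod_ideal_prod_subset_carrier[OF assms(1,2)] by auto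
next
  case (step i x y)
  interpret module R X by fact
  have "y \<in> carrier X" "z \<in> carrier X" "i \<in> carrier R"
    using step(1,3) z mod_ideal_prod_subset_carrier[OF assms(1,2)] I by auto
  then have "i \<odot>\<^bsub>X\<^esub> x \<oplus>\<^bsub>X\<^esub> y \<oplus>\<^bsub>X\<^esub> z = i \<odot>\<^bsub>X\<^esub> x \<oplus>\<^bsub>X\<^esub> (y \<oplus>\<^bsub>X\<^esub> z)"
    using step(2) by (simp add: a_assoc)
  then show ?case using mod_ideal_prod_step[OF assms(1,2) step(4) step(1,2)] by simp
qed

lemma mod_ideal_prod_smult:
  fixes R (structure)
  assumes "module R X" and I: "I \<subseteq> carrier R"
    and y: "y \<in> mod_ideal_prod R X I" and r: "r \<in> carrier R"
  shows "r \<odot>\<^bsub>X\<^esub> y \<in> mod_ideal_prod R X I"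
  using assms(1,2) y
proof (induct y rule: mod_ideal_prod_induct)
  case zero
  interpret module R X by fact
  show ?case using r mod_ideal_prod_zero[OF assms(1)] by simp
next
  case (step i x y)
  interpret module R X by fact
  have i: "i \<in> carrier R" using step(1) I by blast
  then have "r \<odot>\<^bsub>X\<^esub> (i \<odot>\<^bsub>X\<^esub> x) = i \<odot>\<^bsub>X\<^esub> (r \<odot>\<^bsub>X\<^esub> x)"
    using step(2) r by (metis smult_assoc1 m_comm)
  then have "r \<odot>\<^bsub>X\<^esub> (i \<odot>\<^bsub>X\<^esub> x \<oplus>\<^bsub>X\<^esub> y) = i \<odot>\<^bsub>X\<^esub> (r \<odot>\<^bsub>X\<^esub> x) \<oplus>\<^bsub>X\<^esub> r \<odot>\<^bsub>X\<^esub> y"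
    using step(2,3) mod_ideal_prod_subset_carrier[OF assms(1,2)] r i by (auto simp: smult_r_distr)
  then show ?case using mod_ideal_prod_step[OF assms(1,2) step(4) step(1)] step(2) r by simp
qed

lemma mod_ideal_prod_submodule:
  fixes R (structure)
  assumes "module R X" and "I \<subseteq> carrier R"
  shows "submodule (mod_ideal_prod R X I) R X"
proof -
  interpret module R X by fact
  note carrier = mod_ideal_prod_subset_carrier[OF assms]
  show ?thesis
  proof (rule submoduleI[OF carrier mod_ideal_prod_zero[OF assms(1)] _
        mod_ideal_prod_add[OF assms] mod_ideal_prod_smult[OF assms]])
    fix y assume y: "y \<in> mod_ideal_prod R X I"
    then have "\<ominus>\<^bsub>X\<^esub> y = (\<ominus> \<one>) \<odot>\<^bsub>X\<^esub> y" using carrier by (auto simp: smult_l_minus)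
    then show "\<ominus>\<^bsub>X\<^esub> y \<in> mod_ideal_prod R X I" using mod_ideal_prod_smult[OF assms y, of "\<ominus> \<one>"] by simp
  qed
qed

lemma mod_ideal_prod_mono: "I \<subseteq> J \<Longrightarrow> mod_ideal_prod R X I \<subseteq> mod_ideal_prod R X J"
  unfolding mod_ideal_prod_def by blast

lemma mod_ideal_prod_least:
  fixes R (structure)
  assumes "module R X" and "I \<subseteq> carrier R" and N: "submodule N R X"
    and gens: "\<And>i x. i \<in> I \<Longrightarrow> x \<in> carrier X \<Longrightarrow> i \<odot>\<^bsub>X\<^esub> x \<in> N"
  shows "mod_ideal_prod R X I \<subseteq> N"
proof
  fix y assume "y \<in> mod_ideal_prod R X I"
  with assms(1,2) show "y \<in> N"
    by (induct y rule: mod_ideal_prod_induct)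
      (auto simp: submodule_zero_closed[OF N] gens intro: submodule_add_closed[OF N])
qed

lemma mod_ideal_prod_hom_image:
  fixes R (structure)
  assumes M: "module R M" and X: "module R X" and f: "f \<in> mod_hom R M X" and I: "I \<subseteq> carrier R"
    and y: "y \<in> mod_ideal_prod R M I"
  shows "f y \<in> mod_ideal_prod R X I"
  using M I y
proof (induct y rule: mod_ideal_prod_induct)
  case zero
  then show ?case using mod_hom_zero[OF M X f] mod_ideal_prod_zero[OF X] by simp
next
  case (step i x y)
  interpret M: module R M by fact
  have "y \<in> carrier M" using step(3) mod_ideal_prod_subset_carrier[OF M I] by blast
  then have "f (i \<odot>\<^bsub>M\<^esub> x \<oplus>\<^bsub>M\<^esub> y) = i \<odot>\<^bsub>X\<^esub> f x \<oplus>\<^bsub>X\<^esub> f y"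
    using mod_homD[OF f] step(1,2) I by auto
  then show ?case using mod_ideal_prod_step[OF X I step(4) step(1)] mod_homD(1)[OF f step(2)] by simp
qed


section \<open>Linear combinations of a list of ring elements\<close>

lemma nth_mem_subset: "set xs \<subseteq> A \<Longrightarrow> k < length xs \<Longrightarrow> xs ! k \<in> A"
  using nth_mem by blast

definition lincomb :: "('a,'x) module \<Rightarrow> 'a list \<Rightarrow> (nat \<Rightarrow> 'x) \<Rightarrow> 'x" where
  "lincomb X cs ys = finsum X (\<lambda>k. (cs ! k) \<odot>\<^bsub>X\<^esub> ys k) {..<length cs}"

definition lincombs :: "('a,'x) module \<Rightarrow> 'a list \<Rightarrow> 'x set" where
  "lincombs X cs = {lincomb X cs ys | ys. \<forall>k<length cs. ys k \<in> carrier X}"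

lemma lincomb_terms_closed:
  fixes R (structure)
  assumes "module R M" and "set cs \<subseteq> carrier R" and "\<forall>k<length cs. ys k \<in> carrier M"
  shows "(\<lambda>k. (cs ! k) \<odot>\<^bsub>M\<^esub> ys k) \<in> {..<length cs} \<rightarrow> carrier M"
proof -
  interpret module R M by fact
  show ?thesis using assms(2,3) by (auto intro!: smult_closed)
qed

lemma lincomb_closed:
  fixes R (structure)
  assumes "module R M" and "set cs \<subseteq> carrier R" and "\<forall>k<length cs. ys k \<in> carrier M"
  shows "lincomb M cs ys \<in> carrier M"
proof -
  interpret module R M by fact
  show ?thesis unfolding lincomb_def by (rule finsum_closed[OF lincomb_terms_closed[OF assms]])
qed

lemma lincomb_cong:
  fixes R (structure)
  assumes "module R M" and cs: "set cs \<subseteq> carrier R" and zs: "\<forall>k<length cs. zs k \<in> carrier M"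
    and eq: "\<And>k. k < length cs \<Longrightarrow> ys k = zs k"
  shows "lincomb M cs ys = lincomb M cs zs"
proof -
  interpret module R M by fact
  show ?thesis
    unfolding lincomb_def
    by (rule finsum_cong'[OF refl lincomb_terms_closed[OF assms(1) cs zs]]) (simp add: eq)
qed

lemma lincomb_add:
  fixes R (structure)
  assumes M: "module R M" and cs: "set cs \<subseteq> carrier R"
    and ys: "\<forall>k<length cs. ys k \<in> carrier M" and zs: "\<forall>k<length cs. zs k \<in> carrier M"
  shows "lincomb M cs ys \<oplus>\<^bsub>M\<^esub> lincomb M cs zs = lincomb M cs (\<lambda>k. ys k \<oplus>\<^bsub>M\<^esub> zs k)"
proof -
  interpret module R M by fact
  show ?thesis
    unfolding lincomb_def
    by (subst finsum_addf[symmetric], (rule lincomb_terms_closed[OF M cs], fact)+, rule finsum_cong')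
      (use ys zs in \<open>auto simp: smult_r_distr nth_mem_subset[OF cs]\<close>)
qed

lemma lincomb_smult:
  fixes R (structure)
  assumes M: "module R M" and cs: "set cs \<subseteq> carrier R" and ys: "\<forall>k<length cs. ys k \<in> carrier M"
    and r: "r \<in> carrier R"
  shows "r \<odot>\<^bsub>M\<^esub> lincomb M cs ys = lincomb M cs (\<lambda>k. r \<odot>\<^bsub>M\<^esub> ys k)"
proof -
  interpret module R M by fact
  show ?thesis
    unfolding lincomb_def
  proof (subst finsum_smult_ldistr[OF _ r lincomb_terms_closed[OF M cs ys]], simp, rule finsum_cong')
    fix k assume "k \<in> {..<length cs}"
    then have "cs ! k \<in> carrier R" "ys k \<in> carrier M" using cs ys by auto
    then show "r \<odot>\<^bsub>M\<^esub> ((cs ! k) \<odot>\<^bsub>M\<^esub> ys k) = (cs ! k) \<odot>\<^bsub>M\<^esub> (r \<odot>\<^bsub>M\<^esub> ys k)"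
      using r by (metis smult_assoc1 m_comm)
  qed (use cs ys r in \<open>auto intro!: smult_closed\<close>)
qed

lemma lincomb_single:
  fixes R (structure)
  assumes "module R M" and cs: "set cs \<subseteq> carrier R" and m: "m < length cs" and x: "x \<in> carrier M"
  shows "lincomb M cs (\<lambda>k. if k = m then x else \<zero>\<^bsub>M\<^esub>) = (cs ! m) \<odot>\<^bsub>M\<^esub> x"
proof -
  interpret module R M by fact
  have "lincomb M cs (\<lambda>k. if k = m then x else \<zero>\<^bsub>M\<^esub>)
      = finsum M (\<lambda>k. if m = k then (cs ! k) \<odot>\<^bsub>M\<^esub> x else \<zero>\<^bsub>M\<^esub>) {..<length cs}"
    unfolding lincomb_def by (rule finsum_cong') (use x in \<open>auto simp: nth_mem_subset[OF cs]\<close>)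
  also have "\<dots> = (cs ! m) \<odot>\<^bsub>M\<^esub> x"
    by (rule add.finprod_singleton) (use m x in \<open>auto simp: nth_mem_subset[OF cs]\<close>)
  finally show ?thesis .
qed

lemma lincombsI: "\<forall>k<length cs. ys k \<in> carrier M \<Longrightarrow> lincomb M cs ys \<in> lincombs M cs"
  unfolding lincombs_def by blast

lemma lincombsE:
  assumes "y \<in> lincombs M cs"
  obtains ys where "\<forall>k<length cs. ys k \<in> carrier M" and "y = lincomb M cs ys"
  using assms unfolding lincombs_def by blast

lemma lincombs_submodule:
  fixes R (structure)
  assumes M: "module R M" and cs: "set cs \<subseteq> carrier R"
  shows "submodule (lincombs M cs) R M"
proof -
  interpret module R M by fact
  show ?thesis
  proof (rule submoduleI)
    show "lincombs M cs \<subseteq> carrier M"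
      using lincomb_closed[OF M cs] by (auto elim: lincombsE)
    have "lincomb M cs (\<lambda>k. \<zero>\<^bsub>M\<^esub>) = \<zero>\<^bsub>M\<^esub>"
      using lincomb_smult[OF M cs, of "\<lambda>k. \<zero>\<^bsub>M\<^esub>" \<zero>] lincomb_closed[OF M cs, of "\<lambda>k. \<zero>\<^bsub>M\<^esub>"]
      by simp
    then show "\<zero>\<^bsub>M\<^esub> \<in> lincombs M cs"
      using lincombsI[of cs "\<lambda>k. \<zero>\<^bsub>M\<^esub>" M] by simp
  next
    fix a b assume "a \<in> lincombs M cs" "b \<in> lincombs M cs"
    then obtain ys zs where ys: "\<forall>k<length cs. ys k \<in> carrier M" and zs: "\<forall>k<length cs. zs k \<in> carrier M"
      and "a = lincomb M cs ys" "b = lincomb M cs zs"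
      by (metis lincombsE)
    then show "a \<oplus>\<^bsub>M\<^esub> b \<in> lincombs M cs"
      using lincomb_add[OF M cs ys zs] lincombsI[of cs "\<lambda>k. ys k \<oplus>\<^bsub>M\<^esub> zs k" M] by simp
  next
    fix r a assume r: "r \<in> carrier R" and "a \<in> lincombs M cs"
    then obtain ys where ys: "\<forall>k<length cs. ys k \<in> carrier M" and "a = lincomb M cs ys"
      by (metis lincombsE)
    then show "r \<odot>\<^bsub>M\<^esub> a \<in> lincombs M cs"
      using lincomb_smult[OF M cs ys r] lincombsI[of cs "\<lambda>k. r \<odot>\<^bsub>M\<^esub> ys k" M] r by simp
  next
    fix a assume "a \<in> lincombs M cs"
    then obtain ys where ys: "\<forall>k<length cs. ys k \<in> carrier M" and a: "a = lincomb M cs ys"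
      by (metis lincombsE)
    have "\<ominus>\<^bsub>M\<^esub> a = (\<ominus> \<one>) \<odot>\<^bsub>M\<^esub> a"
      using lincomb_closed[OF M cs ys] a by (simp add: smult_l_minus)
    then show "\<ominus>\<^bsub>M\<^esub> a \<in> lincombs M cs"
      using lincomb_smult[OF M cs ys, of "\<ominus> \<one>"] lincombsI[of cs "\<lambda>k. (\<ominus> \<one>) \<odot>\<^bsub>M\<^esub> ys k" M] ys a
      by simp
  qed
qed

lemma hom_lincomb:
  fixes R (structure)
  assumes M: "module R M" and X: "module R X" and f: "f \<in> mod_hom R M X"
    and cs: "set cs \<subseteq> carrier R" and ys: "\<forall>k<length cs. ys k \<in> carrier M"
  shows "f (lincomb M cs ys) = lincomb X cs (\<lambda>k. f (ys k))"
proof -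
  interpret X: module R X by fact
  show ?thesis
    unfolding lincomb_def
    by (subst mod_hom_finsum[OF M X f _ lincomb_terms_closed[OF M cs ys]], simp, rule X.finsum_cong')
      (use ys mod_homD[OF f] in \<open>auto simp: nth_mem_subset[OF cs]\<close>)
qed

lemma lincomb_in_mod_ideal_prod:
  assumes "set cs \<subseteq> I" and "\<forall>k<length cs. ys k \<in> carrier M"
  shows "lincomb M cs ys \<in> mod_ideal_prod R M I"
  unfolding lincomb_def by (rule mod_ideal_prod_sum) (use assms in auto)

lemma submodule_colon_ideal:
  fixes R (structure)
  assumes "module R M" and N: "submodule N R M"
  shows "ideal {a \<in> carrier R. \<forall>x\<in>carrier M. a \<odot>\<^bsub>M\<^esub> x \<in> N} R"
proof -
  interpret module R M by fact
  let ?J = "{a \<in> carrier R. \<forall>x\<in>carrier M. a \<odot>\<^bsub>M\<^esub> x \<in> N}"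
  note closed = submoduleE[OF N]
  have neg: "\<ominus> a \<in> ?J" if a: "a \<in> ?J" for a
  proof -
    have "(\<ominus> a) \<odot>\<^bsub>M\<^esub> x \<in> N" if x: "x \<in> carrier M" for x
    proof -
      have "(\<ominus> a) \<odot>\<^bsub>M\<^esub> x = a \<odot>\<^bsub>M\<^esub> (\<ominus>\<^bsub>M\<^esub> x)"
        using a x by (simp add: smult_l_minus smult_r_minus)
      then show ?thesis using a x by simp
    qed
    then show ?thesis using a by simp
  qed
  have "subgroup ?J (add_monoid R)"
  proof (rule subgroup.intro)
    show "\<And>a. a \<in> ?J \<Longrightarrow> inv\<^bsub>add_monoid R\<^esub> a \<in> ?J"
      using neg by (simp add: a_inv_def[symmetric])
  qed (auto simp: smult_l_distr closed(5) submodule_zero_closed[OF N])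
  then show ?thesis
  proof (rule idealI[OF ring_axioms])
    fix a r assume a: "a \<in> ?J" and r: "r \<in> carrier R"
    then show "r \<otimes> a \<in> ?J" and "a \<otimes> r \<in> ?J"
      using closed(4) by (auto simp: smult_assoc1 m_comm)
  qed
qed

lemma mod_ideal_prod_genideal_subset_lincombs:
  fixes R (structure)
  assumes M: "module R M" and cs: "set cs \<subseteq> carrier R"
  shows "mod_ideal_prod R M (Idl (set cs)) \<subseteq> lincombs M cs"
proof -
  interpret module R M by fact
  let ?J = "{a \<in> carrier R. \<forall>x\<in>carrier M. a \<odot>\<^bsub>M\<^esub> x \<in> lincombs M cs}"
  have "set cs \<subseteq> ?J"
  proof
    fix c assume c: "c \<in> set cs"
    then obtain m where m: "m < length cs" "c = cs ! m" by (auto simp: in_set_conv_nth)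
    have "c \<odot>\<^bsub>M\<^esub> x \<in> lincombs M cs" if x: "x \<in> carrier M" for x
    proof -
      have "lincomb M cs (\<lambda>k. if k = m then x else \<zero>\<^bsub>M\<^esub>) \<in> lincombs M cs"
        by (rule lincombsI) (simp add: x)
      then show ?thesis using lincomb_single[OF M cs m(1) x] m(2) by simp
    qed
    then show "c \<in> ?J" using cs c by auto
  qed
  then have Idl_J: "Idl (set cs) \<subseteq> ?J"
    by (rule genideal_minimal[OF submodule_colon_ideal[OF M lincombs_submodule[OF M cs]]])
  show ?thesis
  proof (rule mod_ideal_prod_least[OF M _ lincombs_submodule[OF M cs]])
    show "Idl (set cs) \<subseteq> carrier R"
      by (rule additive_subgroup.a_subset[OF ideal.axioms(1)[OF genideal_ideal[OF cs]]])
    show "\<And>i x. i \<in> Idl (set cs) \<Longrightarrow> x \<in> carrier M \<Longrightarrow> i \<odot>\<^bsub>M\<^esub> x \<in> lincombs M cs"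
      using Idl_J by blast
  qed
qed


section \<open>Generation and cokernels\<close>

lemma Div_if_Gen:
  fixes R (structure) and T :: "('a,'t) module" and X :: "('a,'x) module"
  assumes T: "module R T" and X: "module R X" and T_Div: "Div R G T" and "Gen R T X"
    and G: "\<And>J. J \<in> G \<Longrightarrow> J \<subseteq> carrier R"
  shows "Div R G X"
  unfolding Div_def
proof
  obtain I :: "('t \<Rightarrow> 'x) set" and p where p: "p \<in> mod_hom R (copies T I) X"
    and p_onto: "p ` carrier (copies T I) = carrier X"
    using \<open>Gen R T X\<close> unfolding Gen_def by blast
  fix J assume J: "J \<in> G"
  have N: "submodule (mod_ideal_prod R X J) R X"
    by (rule mod_ideal_prod_submodule[OF X G[OF J]])
  have "p f \<in> mod_ideal_prod R X J" if "f \<in> carrier (copies T I)" for f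
  proof (rule copies_hom_into_submodule[OF T X p N _ that])
    fix i t assume i: "i \<in> I" and t: "t \<in> carrier T"
    have "t \<in> mod_ideal_prod R T J" using T_Div J t unfolding Div_def by simp
    then show "p (single T i t) \<in> mod_ideal_prod R X J"
      using mod_ideal_prod_hom_image[OF T X mod_hom_comp[OF single_hom[OF T i] p] G[OF J]] by simp
  qed
  then have "carrier X \<subseteq> mod_ideal_prod R X J" unfolding p_onto[symmetric] by (rule image_subsetI)
  then show "mod_ideal_prod R X J = carrier X"
    using mod_ideal_prod_subset_carrier[OF X G[OF J]] by (rule antisym[rotated])
qed

definition eval_sum :: "('a,'t) module \<Rightarrow> ('a,'x) module \<Rightarrow> (('t \<Rightarrow> 'x) \<Rightarrow> 't) \<Rightarrow> 'x" where
  "eval_sum T X f = finsum X (\<lambda>\<phi>. \<phi> (f \<phi>)) {\<phi>. f \<phi> \<noteq> \<zero>\<^bsub>T\<^esub>}"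

lemma eval_sum_superset:
  fixes R (structure)
  assumes T: "module R T" and X: "module R X" and f: "f \<in> carrier (copies T (mod_hom R T X))"
    and A: "finite A" "{\<phi>. f \<phi> \<noteq> \<zero>\<^bsub>T\<^esub>} \<subseteq> A" "A \<subseteq> mod_hom R T X"
  shows "eval_sum T X f = finsum X (\<lambda>\<phi>. \<phi> (f \<phi>)) A"
proof -
  interpret X: module R X by fact
  have "\<phi> (f \<phi>) \<in> carrier X" if "\<phi> \<in> A" for \<phi>
    using A(3) that f by (auto simp: copies_carrier intro: mod_homD(1))
  moreover have "\<phi> (f \<phi>) = \<zero>\<^bsub>X\<^esub>" if "\<phi> \<in> A - {\<phi>. f \<phi> \<noteq> \<zero>\<^bsub>T\<^esub>}" for \<phi>
    using mod_hom_zero[OF T X, of \<phi>] A(3) that by auto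
  ultimately show ?thesis
    unfolding eval_sum_def by (intro X.add.finprod_mono_neutral_cong_left[OF A(1,2)]) auto
qed

lemma eval_sum_terms_closed:
  fixes R (structure)
  assumes "f \<in> carrier (copies T (mod_hom R T X))" and "A \<subseteq> mod_hom R T X"
  shows "(\<lambda>\<phi>. \<phi> (f \<phi>)) \<in> A \<rightarrow> carrier X"
proof
  fix \<phi> assume "\<phi> \<in> A"
  then show "\<phi> (f \<phi>) \<in> carrier X"
    using assms mod_homD(1)[of \<phi> R T X "f \<phi>"] by (auto simp: copies_carrier)
qed

lemma eval_sum_add:
  fixes R (structure)
  assumes T: "module R T" and X: "module R X"
    and f: "f \<in> carrier (copies T (mod_hom R T X))" and g: "g \<in> carrier (copies T (mod_hom R T X))"
  shows "eval_sum T X (f \<oplus>\<^bsub>copies T (mod_hom R T X)\<^esub> g) = eval_sum T X f \<oplus>\<^bsub>X\<^esub> eval_sum T X g"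
proof -
  interpret T: module R T by fact
  interpret X: module R X by fact
  interpret C: module R "copies T (mod_hom R T X)" by (rule copies_module[OF T])
  let ?A = "{\<phi>. f \<phi> \<noteq> \<zero>\<^bsub>T\<^esub>} \<union> {\<phi>. g \<phi> \<noteq> \<zero>\<^bsub>T\<^esub>}"
  have A: "finite ?A" "?A \<subseteq> mod_hom R T X" and f_g: "\<And>\<phi>. f \<phi> \<in> carrier T" "\<And>\<phi>. g \<phi> \<in> carrier T"
    using f g by (auto simp: copies_carrier)
  note terms = eval_sum_terms_closed[OF f A(2)] eval_sum_terms_closed[OF g A(2)]
  have "{\<phi>. (f \<oplus>\<^bsub>copies T (mod_hom R T X)\<^esub> g) \<phi> \<noteq> \<zero>\<^bsub>T\<^esub>} \<subseteq> ?A" using f_g by auto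
  then have "eval_sum T X (f \<oplus>\<^bsub>copies T (mod_hom R T X)\<^esub> g)
      = finsum X (\<lambda>\<phi>. \<phi> ((f \<oplus>\<^bsub>copies T (mod_hom R T X)\<^esub> g) \<phi>)) ?A"
    by (rule eval_sum_superset[OF T X C.a_closed[OF f g] A(1) _ A(2)])
  also have "\<dots> = finsum X (\<lambda>\<phi>. \<phi> (f \<phi>) \<oplus>\<^bsub>X\<^esub> \<phi> (g \<phi>)) ?A"
  proof (rule X.finsum_cong')
    fix \<phi> assume "\<phi> \<in> ?A"
    then have "\<phi> \<in> mod_hom R T X" using A(2) by blast
    then show "\<phi> ((f \<oplus>\<^bsub>copies T (mod_hom R T X)\<^esub> g) \<phi>) = \<phi> (f \<phi>) \<oplus>\<^bsub>X\<^esub> \<phi> (g \<phi>)"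
      using mod_homD(2)[OF _ f_g] by simp
  qed (use terms in \<open>auto simp: Pi_def\<close>)
  also have "\<dots> = finsum X (\<lambda>\<phi>. \<phi> (f \<phi>)) ?A \<oplus>\<^bsub>X\<^esub> finsum X (\<lambda>\<phi>. \<phi> (g \<phi>)) ?A"
    by (rule X.finsum_addf[OF terms])
  also have "\<dots> = eval_sum T X f \<oplus>\<^bsub>X\<^esub> eval_sum T X g"
    by (simp add: eval_sum_superset[OF T X f A(1) _ A(2)] eval_sum_superset[OF T X g A(1) _ A(2)])
  finally show ?thesis .
qed

lemma eval_sum_smult:
  fixes R (structure)
  assumes T: "module R T" and X: "module R X"
    and a: "a \<in> carrier R" and f: "f \<in> carrier (copies T (mod_hom R T X))"
  shows "eval_sum T X (a \<odot>\<^bsub>copies T (mod_hom R T X)\<^esub> f) = a \<odot>\<^bsub>X\<^esub> eval_sum T X f"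
proof -
  interpret T: module R T by fact
  interpret X: module R X by fact
  interpret C: module R "copies T (mod_hom R T X)" by (rule copies_module[OF T])
  let ?A = "{\<phi>. f \<phi> \<noteq> \<zero>\<^bsub>T\<^esub>}"
  have A: "finite ?A" "?A \<subseteq> mod_hom R T X" and f_values: "\<And>\<phi>. f \<phi> \<in> carrier T"
    using f by (auto simp: copies_carrier)
  note terms = eval_sum_terms_closed[OF f A(2)]
  have "{\<phi>. (a \<odot>\<^bsub>copies T (mod_hom R T X)\<^esub> f) \<phi> \<noteq> \<zero>\<^bsub>T\<^esub>} \<subseteq> ?A" using f_values a by auto
  then have "eval_sum T X (a \<odot>\<^bsub>copies T (mod_hom R T X)\<^esub> f)
      = finsum X (\<lambda>\<phi>. \<phi> ((a \<odot>\<^bsub>copies T (mod_hom R T X)\<^esub> f) \<phi>)) ?A"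
    by (rule eval_sum_superset[OF T X C.smult_closed[OF a f] A(1) _ A(2)])
  also have "\<dots> = finsum X (\<lambda>\<phi>. a \<odot>\<^bsub>X\<^esub> \<phi> (f \<phi>)) ?A"
  proof (rule X.finsum_cong')
    fix \<phi> assume "\<phi> \<in> ?A"
    then have "\<phi> \<in> mod_hom R T X" using A(2) by blast
    then show "\<phi> ((a \<odot>\<^bsub>copies T (mod_hom R T X)\<^esub> f) \<phi>) = a \<odot>\<^bsub>X\<^esub> \<phi> (f \<phi>)"
      using mod_homD(3)[OF _ a f_values] by simp
  qed (use terms a in \<open>auto simp: Pi_def\<close>)
  also have "\<dots> = a \<odot>\<^bsub>X\<^esub> eval_sum T X f"
    unfolding eval_sum_def by (rule X.finsum_smult_ldistr[symmetric, OF A(1) a terms])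
  finally show ?thesis .
qed

lemma eval_sum_hom:
  fixes R (structure)
  assumes T: "module R T" and X: "module R X"
  shows "eval_sum T X \<in> mod_hom R (copies T (mod_hom R T X)) X"
proof (rule mod_homI)
  interpret X: module R X by fact
  fix f assume f: "f \<in> carrier (copies T (mod_hom R T X))"
  have "{\<phi>. f \<phi> \<noteq> \<zero>\<^bsub>T\<^esub>} \<subseteq> mod_hom R T X" using f by (auto simp: copies_carrier)
  then show "eval_sum T X f \<in> carrier X"
    unfolding eval_sum_def by (rule X.finsum_closed[OF eval_sum_terms_closed[OF f]])
next
  fix f g assume "f \<in> carrier (copies T (mod_hom R T X))" "g \<in> carrier (copies T (mod_hom R T X))"
  then show "eval_sum T X (f \<oplus>\<^bsub>copies T (mod_hom R T X)\<^esub> g) = eval_sum T X f \<oplus>\<^bsub>X\<^esub> eval_sum T X g"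
    by (rule eval_sum_add[OF T X])
next
  fix a f assume "a \<in> carrier R" "f \<in> carrier (copies T (mod_hom R T X))"
  then show "eval_sum T X (a \<odot>\<^bsub>copies T (mod_hom R T X)\<^esub> f) = a \<odot>\<^bsub>X\<^esub> eval_sum T X f"
    by (rule eval_sum_smult[OF T X])
qed

lemma eval_sum_single:
  fixes R (structure)
  assumes T: "module R T" and X: "module R X" and \<phi>: "\<phi> \<in> mod_hom R T X" and t: "t \<in> carrier T"
  shows "eval_sum T X (single T \<phi> t) = \<phi> t"
proof -
  interpret X: module R X by fact
  have "eval_sum T X (single T \<phi> t) = finsum X (\<lambda>\<psi>. \<psi> (single T \<phi> t \<psi>)) {\<phi>}"
    by (rule eval_sum_superset[OF T X mod_homD(1)[OF single_hom[OF T \<phi>] t]])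
      (use \<phi> in \<open>auto simp: single_def\<close>)
  also have "\<dots> = \<phi> t" using mod_homD(1)[OF \<phi> t] by (simp add: single_def)
  finally show ?thesis .
qed

lemma Gen_if_covered_by_homs:
  fixes R (structure)
  assumes T: "module R T" and X: "module R X"
    and covered: "\<And>x. x \<in> carrier X \<Longrightarrow> \<exists>\<phi>\<in>mod_hom R T X. \<exists>t\<in>carrier T. \<phi> t = x"
  shows "Gen R T X"
proof -
  let ?C = "copies T (mod_hom R T X)"
  have "carrier X \<subseteq> eval_sum T X ` carrier ?C"
  proof
    fix x assume "x \<in> carrier X"
    then obtain \<phi> t where \<phi>: "\<phi> \<in> mod_hom R T X" and t: "t \<in> carrier T" and "\<phi> t = x"
      using covered by blast
    then show "x \<in> eval_sum T X ` carrier ?C"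
      using eval_sum_single[OF T X \<phi> t] mod_homD(1)[OF single_hom[OF T \<phi>] t] by force
  qed
  then have "eval_sum T X ` carrier ?C = carrier X"
    using mod_homD(1)[OF eval_sum_hom[OF T X]] by blast
  then show ?thesis unfolding Gen_def using eval_sum_hom[OF T X] by blast
qed

lemma cokernel_hom_eq:
  fixes R (structure)
  assumes B: "module R B" and T: "module R T" and X: "module R X"
    and coker: "is_cokernel R A B \<alpha> T \<pi>"
    and h: "h \<in> mod_hom R B X" and vanish: "\<And>a. a \<in> carrier A \<Longrightarrow> h (\<alpha> a) = \<zero>\<^bsub>X\<^esub>"
    and y1: "y1 \<in> carrier B" and y2: "y2 \<in> carrier B" and eq: "\<pi> y1 = \<pi> y2"
  shows "h y1 = h y2"
proof -
  interpret B: module R B by fact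
  interpret T: module R T by fact
  interpret X: module R X by fact
  have \<pi>: "\<pi> \<in> mod_hom R B T" and ker: "{y \<in> carrier B. \<pi> y = \<zero>\<^bsub>T\<^esub>} = \<alpha> ` carrier A"
    using coker unfolding is_cokernel_def by auto
  have "\<pi> (y1 \<ominus>\<^bsub>B\<^esub> y2) = \<zero>\<^bsub>T\<^esub>"
    using mod_hom_minus[OF B T \<pi> y1 y2] eq mod_homD(1)[OF \<pi> y2] by (simp add: T.r_neg T.minus_eq)
  then have "y1 \<ominus>\<^bsub>B\<^esub> y2 \<in> \<alpha> ` carrier A" using ker y1 y2 by blast
  then have "h y1 \<ominus>\<^bsub>X\<^esub> h y2 = \<zero>\<^bsub>X\<^esub>" using mod_hom_minus[OF B X h y1 y2] vanish by auto
  then show ?thesis using X.eq_if_minus_eq_zero mod_homD(1)[OF h] y1 y2 by blast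
qed

lemma cokernel_factor:
  fixes R (structure)
  assumes B: "module R B" and T: "module R T" and X: "module R X"
    and coker: "is_cokernel R A B \<alpha> T \<pi>"
    and h: "h \<in> mod_hom R B X" and vanish: "\<And>a. a \<in> carrier A \<Longrightarrow> h (\<alpha> a) = \<zero>\<^bsub>X\<^esub>"
  shows "\<exists>\<phi>\<in>mod_hom R T X. \<forall>y\<in>carrier B. \<phi> (\<pi> y) = h y"
proof -
  interpret B: module R B by fact
  have \<pi>: "\<pi> \<in> mod_hom R B T" and lift: "\<And>t. t \<in> carrier T \<Longrightarrow> \<exists>y\<in>carrier B. t = \<pi> y"
    using coker unfolding is_cokernel_def by auto
  define \<phi> where "\<phi> t = h (SOME y. y \<in> carrier B \<and> \<pi> y = t)" for t
  have \<phi>_\<pi>: "\<phi> (\<pi> y) = h y" if y: "y \<in> carrier B" for y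
  proof -
    have "(SOME y'. y' \<in> carrier B \<and> \<pi> y' = \<pi> y) \<in> carrier B \<and> \<pi> (SOME y'. y' \<in> carrier B \<and> \<pi> y' = \<pi> y) = \<pi> y"
      by (rule someI_ex) (use y in blast)
    then show ?thesis unfolding \<phi>_def using cokernel_hom_eq[OF assms] y by blast
  qed
  have "\<phi> \<in> mod_hom R T X"
  proof (rule mod_homI)
    fix t assume "t \<in> carrier T"
    then obtain y where "y \<in> carrier B" "t = \<pi> y" using lift by blast
    then show "\<phi> t \<in> carrier X" using \<phi>_\<pi> mod_homD(1)[OF h] by simp
  next
    fix t1 t2 assume "t1 \<in> carrier T" "t2 \<in> carrier T"
    then obtain y1 y2 where y: "y1 \<in> carrier B" "y2 \<in> carrier B" and t: "t1 = \<pi> y1" "t2 = \<pi> y2"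
      using lift by meson
    have "\<phi> (t1 \<oplus>\<^bsub>T\<^esub> t2) = \<phi> (\<pi> (y1 \<oplus>\<^bsub>B\<^esub> y2))" using mod_homD(2)[OF \<pi> y] t by simp
    also have "\<dots> = h y1 \<oplus>\<^bsub>X\<^esub> h y2" using \<phi>_\<pi>[OF B.a_closed[OF y]] mod_homD(2)[OF h y] by simp
    finally show "\<phi> (t1 \<oplus>\<^bsub>T\<^esub> t2) = \<phi> t1 \<oplus>\<^bsub>X\<^esub> \<phi> t2" using \<phi>_\<pi> y t by simp
  next
    fix a t assume a: "a \<in> carrier R" and "t \<in> carrier T"
    then obtain y where y: "y \<in> carrier B" and t: "t = \<pi> y" using lift by blast
    have "\<phi> (a \<odot>\<^bsub>T\<^esub> t) = \<phi> (\<pi> (a \<odot>\<^bsub>B\<^esub> y))" using mod_homD(3)[OF \<pi> a y] t by simp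
    also have "\<dots> = a \<odot>\<^bsub>X\<^esub> h y" using \<phi>_\<pi>[OF B.smult_closed[OF a y]] mod_homD(3)[OF h a y] by simp
    finally show "\<phi> (a \<odot>\<^bsub>T\<^esub> t) = a \<odot>\<^bsub>X\<^esub> \<phi> t" using \<phi>_\<pi> y t by simp
  qed
  then show ?thesis using \<phi>_\<pi> by blast
qed

section \<open>The construction\<close>

primrec rev_rec :: "'x \<Rightarrow> ('p list \<Rightarrow> 'p \<Rightarrow> 'x \<Rightarrow> 'x) \<Rightarrow> 'p list \<Rightarrow> 'x" where
  "rev_rec r step [] = r"
| "rev_rec r step (p # ps) = step (rev ps) p (rev_rec r step ps)"

locale gabriel_construction =
  fixes R (structure) and G :: "'a set set" and gens :: "'a set \<Rightarrow> 'a list"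
  assumes cring: "cring R"
    and ideals: "\<And>I. I \<in> G \<Longrightarrow> ideal I R"
    and finite_type: "finite_type R G"
    and gens_carrier: "\<And>I. I \<in> fgI R G \<Longrightarrow> set (gens I) \<subseteq> carrier R"
    and gens_generate: "\<And>I. I \<in> fgI R G \<Longrightarrow> Idl (set (gens I)) = I"
begin

interpretation cring R by (rule cring)

abbreviation "F \<equiv> FG R G gens"
abbreviation "F' \<equiv> FG' R G gens"
abbreviation "K \<equiv> KG R G gens"
abbreviation "Lm \<equiv> Lam R G gens"
abbreviation "fI \<equiv> fgI R G"
abbreviation "src \<equiv> sigma_src R G gens"
abbreviation "tgt \<equiv> sigma_tgt R G gens"
abbreviation "\<sigma> \<equiv> sigmaG R G gens"

lemma module_F: "module R F" unfolding FG_def by (rule free_module_module[OF cring])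
lemma module_F': "module R F'" unfolding FG'_def by (rule free_module_module[OF cring])
lemma module_K: "module R K" unfolding KG_def by (rule free_module_module[OF cring])
lemma module_tgt: "module R tgt" unfolding sigma_tgt_def by (rule dsum_module[OF module_F module_F'])

lemma zeros_closed: "\<zero>\<^bsub>F\<^esub> \<in> carrier F" "\<zero>\<^bsub>F'\<^esub> \<in> carrier F'" "\<zero>\<^bsub>K\<^esub> \<in> carrier K"
  by (simp_all add: FG_def FG'_def KG_def free_module_carrier)

lemma G_subset_carrier: "I \<in> G \<Longrightarrow> I \<subseteq> carrier R"
  by (rule additive_subgroup.a_subset[OF ideal.axioms(1)[OF ideals]])

lemma gens_subset: "I \<in> fI \<Longrightarrow> set (gens I) \<subseteq> I"
  using genideal_self[OF gens_carrier] gens_generate by metis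

lemma Div_if_fgI:
  assumes X: "module R X" and XI: "\<And>I. I \<in> fI \<Longrightarrow> carrier X \<subseteq> mod_ideal_prod R X I"
  shows "Div R G X"
  unfolding Div_def
proof
  fix J assume J: "J \<in> G"
  obtain I where I: "I \<in> fI" "I \<subseteq> J"
    using finite_type J unfolding finite_type_def fgI_def by blast
  have "carrier X \<subseteq> mod_ideal_prod R X J"
    using XI[OF I(1)] mod_ideal_prod_mono[OF I(2)] by (rule subset_trans)
  then show "mod_ideal_prod R X J = carrier X"
    using mod_ideal_prod_subset_carrier[OF X G_subset_carrier[OF J]] by (rule antisym[rotated])
qed

lemma Lam_snoc: "l \<in> Lm \<Longrightarrow> I \<in> fI \<Longrightarrow> k < length (gens I) \<Longrightarrow> l @ [(I,k)] \<in> Lm"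
  by (auto simp: Lam_def)

lemma Lam_snocD: "l @ [(I,k)] \<in> Lm \<Longrightarrow> l \<in> Lm \<and> I \<in> fI \<and> k < length (gens I)"
  by (auto simp: Lam_def)

lemma Lam_Nil: "[] \<in> Lm"
  by (simp add: Lam_def)

lemma fbasis_F: "l \<in> Lm \<Longrightarrow> fbasis R l \<in> carrier F"
  unfolding FG_def by (rule fbasis_carrier[OF cring])

lemma fbasis_K: "l \<in> Lm \<Longrightarrow> I \<in> fI \<Longrightarrow> fbasis R (l,I) \<in> carrier K"
  unfolding KG_def by (rule fbasis_carrier[OF cring]) simp

lemma K_carrier_values: "f \<in> carrier K \<Longrightarrow> f b \<in> carrier R"
  unfolding KG_def free_module_carrier by blast

lemma phi_basis_eq:
  "phi_basis R G gens (l, I) = fbasis R l \<ominus>\<^bsub>F\<^esub> lincomb F (gens I) (\<lambda>k. fbasis R (l @ [(I,k)]))"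
  by (simp add: phi_basis_def lincomb_def)

lemma phi_basis_carrier: "l \<in> Lm \<Longrightarrow> I \<in> fI \<Longrightarrow> phi_basis R G gens (l, I) \<in> carrier F"
proof -
  assume l: "l \<in> Lm" and I: "I \<in> fI"
  interpret F: module R F by (rule module_F)
  have "\<forall>k<length (gens I). fbasis R (l @ [(I,k)]) \<in> carrier F"
    using fbasis_F Lam_snoc[OF l I] by blast
  then show ?thesis
    unfolding phi_basis_eq using lincomb_closed[OF module_F gens_carrier[OF I]] fbasis_F[OF l] by simp
qed

lemma phiG_hom: "phiG R G gens \<in> mod_hom R K F"
  unfolding phiG_def KG_def by (rule lin_ext_hom[OF module_F]) (use phi_basis_carrier in auto)

lemma phiG_fbasis: "l \<in> Lm \<Longrightarrow> I \<in> fI \<Longrightarrow> phiG R G gens (fbasis R (l,I)) = phi_basis R G gens (l, I)"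
  unfolding phiG_def by (rule lin_ext_fbasis[OF module_F, of "phi_basis R G gens", OF phi_basis_carrier])

lemma projw_hom: "projw R \<in> mod_hom R F F'"
proof (rule mod_homI)
  fix x assume "x \<in> carrier F"
  then have x: "\<forall>b. x b \<in> carrier R" "\<forall>b. b \<notin> Lm \<longrightarrow> x b = \<zero>" "finite {b. x b \<noteq> \<zero>}"
    by (auto simp: FG_def free_module_carrier)
  have "{b. projw R x b \<noteq> \<zero>} \<subseteq> {b. x b \<noteq> \<zero>}" by (auto simp: projw_def)
  then have "finite {b. projw R x b \<noteq> \<zero>}" using x(3) by (rule finite_subset)
  then show "projw R x \<in> carrier F'" using x(1,2)
    by (simp add: FG'_def free_module_carrier projw_def)
qed (auto simp: FG_def FG'_def projw_def)

lemma projw_fbasis: "l \<noteq> [] \<Longrightarrow> projw R (fbasis R l) = fbasis R l"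
  by (auto simp: projw_def fbasis_def)

lemma projw_fbasis_Nil: "projw R (fbasis R []) = \<zero>\<^bsub>F'\<^esub>"
  by (auto simp: projw_def fbasis_def FG'_def)

lemma sigmaG_apply: "\<sigma> (a, b) = (phiG R G gens a, projw R (phiG R G gens b))"
  by (simp add: sigmaG_def phiG'_def)

lemma hom_phi_basis:
  assumes X: "module R X" and L: "L \<in> mod_hom R F X" and l: "l \<in> Lm" and I: "I \<in> fI"
  shows "L (phi_basis R G gens (l, I))
       = L (fbasis R l) \<ominus>\<^bsub>X\<^esub> lincomb X (gens I) (\<lambda>k. L (fbasis R (l @ [(I,k)])))"
proof -
  have basis: "\<forall>k<length (gens I). fbasis R (l @ [(I,k)]) \<in> carrier F"
    using fbasis_F Lam_snoc[OF l I] by blast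
  show ?thesis
    unfolding phi_basis_eq
    by (simp add: mod_hom_minus[OF module_F X L fbasis_F[OF l]
          lincomb_closed[OF module_F gens_carrier[OF I] basis]]
        hom_lincomb[OF module_F X L gens_carrier[OF I] basis])
qed

lemma hom_fbasis_in_mod_ideal_prod:
  assumes X: "module R X" and L: "L \<in> mod_hom R F X" and l: "l \<in> Lm" and I: "I \<in> fI"
    and vanish: "L (phi_basis R G gens (l, I)) = \<zero>\<^bsub>X\<^esub>"
  shows "L (fbasis R l) \<in> mod_ideal_prod R X I"
proof -
  interpret X: module R X by fact
  let ?c = "lincomb X (gens I) (\<lambda>k. L (fbasis R (l @ [(I,k)])))"
  have images: "\<forall>k<length (gens I). L (fbasis R (l @ [(I,k)])) \<in> carrier X"
    using mod_homD(1)[OF L fbasis_F[OF Lam_snoc[OF l I]]] by blast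
  have "L (fbasis R l) = ?c"
    using vanish hom_phi_basis[OF X L l I] mod_homD(1)[OF L fbasis_F[OF l]]
      lincomb_closed[OF X gens_carrier[OF I] images]
    by (simp add: X.eq_if_minus_eq_zero)
  then show ?thesis using lincomb_in_mod_ideal_prod[OF gens_subset[OF I] images] by simp
qed

lemma D_class_imp_Div:
  assumes X: "module R X" and D: "D_class R src tgt \<sigma> X"
  shows "Div R G X"
proof (rule Div_if_fgI[OF X], rule subsetI)
  interpret X: module R X by fact
  fix I x assume I: "I \<in> fI" and x: "x \<in> carrier X"
  define g where "g p = snd p ([], I) \<odot>\<^bsub>X\<^esub> x"
    for p :: "(('a set \<times> nat) list \<times> 'a set \<Rightarrow> 'a) \<times> (('a set \<times> nat) list \<times> 'a set \<Rightarrow> 'a)"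
  have "g \<in> mod_hom R src X"
    by (rule mod_homI) (use x K_carrier_values in
        \<open>auto simp: g_def sigma_src_def KG_def X.smult_l_distr X.smult_assoc1\<close>)
  then obtain h where h: "h \<in> mod_hom R tgt X" and h_\<sigma>: "\<And>a. a \<in> carrier src \<Longrightarrow> h (\<sigma> a) = g a"
    using D unfolding D_class_def by blast
  define L where "L = h \<circ> (\<lambda>y. (\<zero>\<^bsub>F\<^esub>, y)) \<circ> projw R"
  have L: "L \<in> mod_hom R F X"
    unfolding L_def sigma_tgt_def
    by (intro mod_hom_comp[OF projw_hom] mod_hom_comp[OF mod_hom_dsum_inr[OF module_F]])
      (use h in \<open>simp add: sigma_tgt_def\<close>)
  have "L (fbasis R []) = \<zero>\<^bsub>X\<^esub>"
    using mod_hom_zero[OF module_tgt X h] by (simp add: L_def projw_fbasis_Nil sigma_tgt_def)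
  moreover have "L (phi_basis R G gens ([], I)) = x"
  proof -
    have "(\<zero>\<^bsub>K\<^esub>, fbasis R ([], I)) \<in> carrier src"
      using fbasis_K[OF Lam_Nil I] zeros_closed(3) by (simp add: sigma_src_def)
    then have "h (\<sigma> (\<zero>\<^bsub>K\<^esub>, fbasis R ([], I))) = x"
      using h_\<sigma> x by (simp add: g_def fbasis_def)
    then show ?thesis
      using mod_hom_zero[OF module_K module_F phiG_hom]
      by (simp add: L_def sigmaG_apply phiG_fbasis[OF Lam_Nil I])
  qed
  moreover have images: "\<forall>k<length (gens I). L (fbasis R ([] @ [(I,k)])) \<in> carrier X"
    using mod_homD(1)[OF L fbasis_F[OF Lam_snoc[OF Lam_Nil I]]] by blast
  ultimately have "x = \<ominus>\<^bsub>X\<^esub> lincomb X (gens I) (\<lambda>k. L (fbasis R ([] @ [(I,k)])))"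
    using hom_phi_basis[OF X L Lam_Nil I] lincomb_closed[OF X gens_carrier[OF I] images]
    by (simp add: X.minus_eq)
  then show "x \<in> mod_ideal_prod R X I"
    using X.submoduleE(3)[OF mod_ideal_prod_submodule[OF X G_subset_carrier]]
      lincomb_in_mod_ideal_prod[where R=R, OF gens_subset[OF I] images] I
    by (simp add: fgI_def)
qed

lemma Div_imp_lincombs:
  assumes X: "module R X" and "Div R G X" and I: "I \<in> fI" and t: "t \<in> carrier X"
  shows "t \<in> lincombs X (gens I)"
proof -
  have "t \<in> mod_ideal_prod R X (Idl (set (gens I)))"
    using \<open>Div R G X\<close> I t gens_generate[OF I] unfolding Div_def fgI_def by auto
  then show ?thesis using mod_ideal_prod_genideal_subset_lincombs[OF X gens_carrier[OF I]] by blast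
qed

lemma tree_solution_exists:
  assumes X: "module R X" and "Div R G X"
    and rhs: "\<And>l I. l \<in> Lm \<Longrightarrow> I \<in> fI \<Longrightarrow> rhs l I \<in> carrier X" and r: "r \<in> carrier X"
  shows "\<exists>v. v [] = r \<and> (\<forall>l\<in>Lm. v l \<in> carrier X) \<and>
     (\<forall>l\<in>Lm. \<forall>I\<in>fI. v l \<ominus>\<^bsub>X\<^esub> lincomb X (gens I) (\<lambda>k. v (l @ [(I,k)])) = rhs l I)"
proof -
  interpret X: module R X by fact
  let ?repr = "\<lambda>t I ys. (\<forall>k<length (gens I). ys k \<in> carrier X) \<and> t = lincomb X (gens I) ys"
  define choice where "choice t I = (SOME ys. ?repr t I ys)" for t I
  have choice: "?repr t I (choice t I)" if "t \<in> carrier X" "I \<in> fI" for t I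
  proof -
    have "\<exists>ys. ?repr t I ys"
      using Div_imp_lincombs[OF X \<open>Div R G X\<close> that(2,1)] by (auto elim: lincombsE)
    then show ?thesis unfolding choice_def by (rule someI_ex)
  qed
  define v where "v l = rev_rec r (\<lambda>l p t. choice (t \<ominus>\<^bsub>X\<^esub> rhs l (fst p)) (fst p) (snd p)) (rev l)" for l
  have v_snoc: "v (l @ [(I,k)]) = choice (v l \<ominus>\<^bsub>X\<^esub> rhs l I) I k" for l I k
    by (simp add: v_def)
  have v_carrier: "v l \<in> carrier X" if "l \<in> Lm" for l
    using that
  proof (induct l rule: rev_induct)
    case Nil
    then show ?case using r by (simp add: v_def)
  next
    case (snoc p l)
    obtain I k where p: "p = (I,k)" by (cases p)
    have "l \<in> Lm" "I \<in> fI" "k < length (gens I)" using Lam_snocD snoc(2) unfolding p by auto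
    then show ?case
      unfolding p v_snoc using choice[of "v l \<ominus>\<^bsub>X\<^esub> rhs l I" I] snoc(1) rhs by auto
  qed
  have "v l \<ominus>\<^bsub>X\<^esub> lincomb X (gens I) (\<lambda>k. v (l @ [(I,k)])) = rhs l I"
    if l: "l \<in> Lm" and I: "I \<in> fI" for l I
  proof -
    have "v l \<ominus>\<^bsub>X\<^esub> rhs l I \<in> carrier X" using v_carrier[OF l] rhs[OF l I] by simp
    then have "lincomb X (gens I) (\<lambda>k. v (l @ [(I,k)])) = v l \<ominus>\<^bsub>X\<^esub> rhs l I"
      using choice[OF _ I] unfolding v_snoc by auto
    then show ?thesis using v_carrier[OF l] rhs[OF l I]
      by (simp add: X.minus_eq X.minus_add X.minus_minus X.a_assoc[symmetric] X.r_neg)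
  qed
  moreover have "v [] = r" by (simp add: v_def)
  ultimately show ?thesis using v_carrier by blast
qed

lemma lin_ext_phiG:
  assumes X: "module R X" and g: "g \<in> mod_hom R K X" and v: "\<forall>l\<in>Lm. v l \<in> carrier X"
    and eq: "\<And>l I. l \<in> Lm \<Longrightarrow> I \<in> fI
               \<Longrightarrow> v l \<ominus>\<^bsub>X\<^esub> lincomb X (gens I) (\<lambda>k. v (l @ [(I,k)])) = g (fbasis R (l,I))"
    and a: "a \<in> carrier K"
  shows "lin_ext R X v (phiG R G gens a) = g a"
proof -
  have L: "lin_ext R X v \<in> mod_hom R F X"
    unfolding FG_def by (rule lin_ext_hom[OF X]) (use v in blast)
  have "(lin_ext R X v \<circ> phiG R G gens) a = g a"
  proof (rule free_module_hom_ext[OF X, where f="lin_ext R X v \<circ> phiG R G gens" and g=g and x=a])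
    show "lin_ext R X v \<circ> phiG R G gens \<in> mod_hom R (free_module R (Lm \<times> fI)) X"
      using mod_hom_comp[OF phiG_hom L] by (simp add: KG_def)
    show "g \<in> mod_hom R (free_module R (Lm \<times> fI)) X" using g by (simp add: KG_def)
    show "a \<in> carrier (free_module R (Lm \<times> fI))" using a by (simp add: KG_def)
  next
    fix b assume "b \<in> Lm \<times> fI"
    then obtain l I where b: "b = (l,I)" and l: "l \<in> Lm" and I: "I \<in> fI" by blast
    have images: "\<forall>k<length (gens I). v (l @ [(I,k)]) \<in> carrier X"
      using v Lam_snoc[OF l I] by blast
    have "lincomb X (gens I) (\<lambda>k. lin_ext R X v (fbasis R (l @ [(I,k)])))
        = lincomb X (gens I) (\<lambda>k. v (l @ [(I,k)]))"
    proof (rule lincomb_cong[OF X gens_carrier[OF I] images])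
      fix k assume "k < length (gens I)"
      then show "lin_ext R X v (fbasis R (l @ [(I,k)])) = v (l @ [(I,k)])"
        using images by (intro lin_ext_fbasis[OF X]) blast
    qed
    then show "(lin_ext R X v \<circ> phiG R G gens) (fbasis R b) = g (fbasis R b)"
      using hom_phi_basis[OF X L l I] lin_ext_fbasis[OF X, of v l] v l eq[OF l I]
      by (simp add: b phiG_fbasis[OF l I])
  qed
  then show ?thesis by simp
qed

lemma lin_ext_projw:
  assumes X: "module R X" and v_Nil: "v [] = \<zero>\<^bsub>X\<^esub>" and v: "\<forall>l\<in>Lm. v l \<in> carrier X"
    and f: "f \<in> carrier F"
  shows "lin_ext R X v (projw R f) = lin_ext R X v f"
proof -
  interpret X: module R X by fact
  have f': "f \<in> carrier (free_module R Lm)" using f by (simp add: FG_def)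
  have pf: "projw R f \<in> carrier (free_module R Lm)"
    using mod_homD(1)[OF projw_hom f] by (auto simp: FG'_def free_module_carrier)
  let ?A = "{b. f b \<noteq> \<zero>}"
  have A: "finite ?A" "v ` ?A \<subseteq> carrier X" using f' v by (auto simp: free_module_carrier)
  have f_carrier: "\<And>b. f b \<in> carrier R" using f' by (simp add: free_module_carrier)
  have "lin_ext R X v (projw R f) = finsum X (\<lambda>b. projw R f b \<odot>\<^bsub>X\<^esub> v b) ?A"
    by (rule lin_ext_superset[OF X pf A(1) _ A(2)]) (auto simp: projw_def)
  also have "\<dots> = finsum X (\<lambda>b. f b \<odot>\<^bsub>X\<^esub> v b) ?A"
    by (rule X.finsum_cong') (use A f_carrier v_Nil in \<open>auto simp: projw_def\<close>)
  also have "\<dots> = lin_ext R X v f"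
    by (rule lin_ext_superset[OF X f' A(1) _ A(2), symmetric]) simp
  finally show ?thesis .
qed

lemma lin_ext_pair_sigmaG:
  assumes X: "module R X" and g: "g \<in> mod_hom R src X"
    and v: "\<forall>l\<in>Lm. v l \<in> carrier X" and w: "\<forall>l\<in>Lm. w l \<in> carrier X" and w_Nil: "w [] = \<zero>\<^bsub>X\<^esub>"
    and v_eq: "\<And>l I. l \<in> Lm \<Longrightarrow> I \<in> fI
                 \<Longrightarrow> v l \<ominus>\<^bsub>X\<^esub> lincomb X (gens I) (\<lambda>k. v (l @ [(I,k)])) = g (fbasis R (l,I), \<zero>\<^bsub>K\<^esub>)"
    and w_eq: "\<And>l I. l \<in> Lm \<Longrightarrow> I \<in> fI
                 \<Longrightarrow> w l \<ominus>\<^bsub>X\<^esub> lincomb X (gens I) (\<lambda>k. w (l @ [(I,k)])) = g (\<zero>\<^bsub>K\<^esub>, fbasis R (l,I))"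
    and p: "p \<in> carrier src"
  shows "lin_ext R X v (fst (\<sigma> p)) \<oplus>\<^bsub>X\<^esub> lin_ext R X w (snd (\<sigma> p)) = g p"
proof -
  interpret K: module R K by (rule module_K)
  let ?g1 = "g \<circ> (\<lambda>a. (a, \<zero>\<^bsub>K\<^esub>))" and ?g2 = "g \<circ> (\<lambda>b. (\<zero>\<^bsub>K\<^esub>, b))"
  have g1: "?g1 \<in> mod_hom R K X"
    using mod_hom_comp[OF mod_hom_dsum_inl[OF module_K] g[unfolded sigma_src_def]] by simp
  have g2: "?g2 \<in> mod_hom R K X"
    using mod_hom_comp[OF mod_hom_dsum_inr[OF module_K] g[unfolded sigma_src_def]] by simp
  obtain a b where ab: "p = (a, b)" "a \<in> carrier K" "b \<in> carrier K"
    using p by (auto simp: sigma_src_def)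
  have "lin_ext R X v (fst (\<sigma> p)) \<oplus>\<^bsub>X\<^esub> lin_ext R X w (snd (\<sigma> p)) = ?g1 a \<oplus>\<^bsub>X\<^esub> ?g2 b"
    using lin_ext_phiG[OF X g1 v _ ab(2)] lin_ext_phiG[OF X g2 w _ ab(3)] v_eq w_eq
      lin_ext_projw[OF X w_Nil w mod_homD(1)[OF phiG_hom ab(3)]]
    by (simp add: ab(1) sigmaG_apply)
  also have "\<dots> = g p"
    using mod_homD(2)[OF g, of "(a, \<zero>\<^bsub>K\<^esub>)" "(\<zero>\<^bsub>K\<^esub>, b)"] ab by (simp add: sigma_src_def)
  finally show ?thesis .
qed

lemma extension_along_sigmaG:
  assumes X: "module R X" and "Div R G X" and g: "g \<in> mod_hom R src X" and r: "r \<in> carrier X"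
  shows "\<exists>h\<in>mod_hom R tgt X. (\<forall>a\<in>carrier src. h (\<sigma> a) = g a) \<and> h (fbasis R [], \<zero>\<^bsub>F'\<^esub>) = r"
proof -
  interpret X: module R X by fact
  have rhs: "g (fbasis R (l,I), \<zero>\<^bsub>K\<^esub>) \<in> carrier X" "g (\<zero>\<^bsub>K\<^esub>, fbasis R (l,I)) \<in> carrier X"
    if "l \<in> Lm" "I \<in> fI" for l I
    using mod_homD(1)[OF g] fbasis_K[OF that] zeros_closed(3) by (simp_all add: sigma_src_def)
  obtain v where v_Nil: "v [] = r" and v: "\<forall>l\<in>Lm. v l \<in> carrier X"
    and v_eq: "\<forall>l\<in>Lm. \<forall>I\<in>fI. v l \<ominus>\<^bsub>X\<^esub> lincomb X (gens I) (\<lambda>k. v (l @ [(I,k)])) = g (fbasis R (l,I), \<zero>\<^bsub>K\<^esub>)"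
    using tree_solution_exists[OF X \<open>Div R G X\<close>, where rhs="\<lambda>l I. g (fbasis R (l,I), \<zero>\<^bsub>K\<^esub>)", OF rhs(1) r]
    by blast
  obtain w where w_Nil: "w [] = \<zero>\<^bsub>X\<^esub>" and w: "\<forall>l\<in>Lm. w l \<in> carrier X"
    and w_eq: "\<forall>l\<in>Lm. \<forall>I\<in>fI. w l \<ominus>\<^bsub>X\<^esub> lincomb X (gens I) (\<lambda>k. w (l @ [(I,k)])) = g (\<zero>\<^bsub>K\<^esub>, fbasis R (l,I))"
    using tree_solution_exists[OF X \<open>Div R G X\<close>, where rhs="\<lambda>l I. g (\<zero>\<^bsub>K\<^esub>, fbasis R (l,I))", OF rhs(2)]
    by blast
  have Lv: "lin_ext R X v \<in> mod_hom R F X"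
    unfolding FG_def by (rule lin_ext_hom[OF X]) (use v in blast)
  have Lw: "lin_ext R X w \<in> mod_hom R F' X"
    unfolding FG'_def by (rule lin_ext_hom[OF X]) (use w in blast)
  define h where "h p = lin_ext R X v (fst p) \<oplus>\<^bsub>X\<^esub> lin_ext R X w (snd p)" for p
  have "h \<in> mod_hom R tgt X"
    unfolding h_def sigma_tgt_def by (rule mod_hom_dsum_case[OF X Lv Lw])
  moreover have "h (\<sigma> p) = g p" if "p \<in> carrier src" for p
    unfolding h_def using lin_ext_pair_sigmaG[OF X g v w w_Nil _ _ that] v_eq w_eq by blast
  moreover have "h (fbasis R [], \<zero>\<^bsub>F'\<^esub>) = r"
    using lin_ext_fbasis[OF X, of v "[]"] mod_hom_zero[OF module_F' X Lw] v_Nil r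
    by (simp add: h_def)
  ultimately show ?thesis by blast
qed

lemma Div_iff_D_class:
  assumes X: "module R X"
  shows "Div R G X \<longleftrightarrow> D_class R src tgt \<sigma> X"
proof
  interpret X: module R X by fact
  assume "Div R G X"
  then show "D_class R src tgt \<sigma> X"
    unfolding D_class_def using extension_along_sigmaG[OF X \<open>Div R G X\<close> _ X.zero_closed] by blast
qed (rule D_class_imp_Div[OF X])

lemma cokernel_relations:
  assumes coker: "is_cokernel R src tgt \<sigma> T \<pi>" and l: "l \<in> Lm" and I: "I \<in> fI"
  shows "\<pi> (phi_basis R G gens (l, I), \<zero>\<^bsub>F'\<^esub>) = \<zero>\<^bsub>T\<^esub>"
    and "\<pi> (\<zero>\<^bsub>F\<^esub>, projw R (phi_basis R G gens (l, I))) = \<zero>\<^bsub>T\<^esub>"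
proof -
  have \<pi>_\<sigma>: "\<And>a. a \<in> carrier src \<Longrightarrow> \<pi> (\<sigma> a) = \<zero>\<^bsub>T\<^esub>"
    using coker unfolding is_cokernel_def by blast
  have src: "(fbasis R (l, I), \<zero>\<^bsub>K\<^esub>) \<in> carrier src" "(\<zero>\<^bsub>K\<^esub>, fbasis R (l, I)) \<in> carrier src"
    using fbasis_K[OF l I] zeros_closed(3) by (simp_all add: sigma_src_def)
  note zeros = mod_hom_zero[OF module_K module_F phiG_hom] mod_hom_zero[OF module_F module_F' projw_hom]
  show "\<pi> (phi_basis R G gens (l, I), \<zero>\<^bsub>F'\<^esub>) = \<zero>\<^bsub>T\<^esub>"
    using \<pi>_\<sigma>[OF src(1)] zeros by (simp add: sigmaG_apply phiG_fbasis[OF l I])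
  show "\<pi> (\<zero>\<^bsub>F\<^esub>, projw R (phi_basis R G gens (l, I))) = \<zero>\<^bsub>T\<^esub>"
    using \<pi>_\<sigma>[OF src(2)] zeros by (simp add: sigmaG_apply phiG_fbasis[OF l I])
qed

lemma cokernel_Div:
  assumes T: "module R T" and coker: "is_cokernel R src tgt \<sigma> T \<pi>"
  shows "Div R G T"
proof (rule Div_if_fgI[OF T], rule subsetI)
  interpret T: module R T by fact
  interpret F: module R F by (rule module_F)
  interpret F': module R F' by (rule module_F')
  fix I t assume I: "I \<in> fI" and t: "t \<in> carrier T"
  have \<pi>: "\<pi> \<in> mod_hom R tgt T" and \<pi>_onto: "\<pi> ` carrier tgt = carrier T"
    using coker unfolding is_cokernel_def by blast+
  have N: "submodule (mod_ideal_prod R T I) R T"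
    by (rule mod_ideal_prod_submodule[OF T G_subset_carrier]) (use I in \<open>simp add: fgI_def\<close>)
  let ?L1 = "\<pi> \<circ> (\<lambda>x. (x, \<zero>\<^bsub>F'\<^esub>))" and ?L2 = "\<pi> \<circ> (\<lambda>y. (\<zero>\<^bsub>F\<^esub>, y))"
  have L1: "?L1 \<in> mod_hom R F T"
    by (rule mod_hom_comp[OF mod_hom_dsum_inl[OF module_F'] \<pi>[unfolded sigma_tgt_def]])
  have L2: "?L2 \<in> mod_hom R F' T"
    by (rule mod_hom_comp[OF mod_hom_dsum_inr[OF module_F] \<pi>[unfolded sigma_tgt_def]])
  have L1_image: "?L1 f \<in> mod_ideal_prod R T I" if "f \<in> carrier F" for f
  proof (rule free_module_hom_into_submodule[OF T L1[unfolded FG_def] N _ that[unfolded FG_def]])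
    fix l assume l: "l \<in> Lm"
    show "?L1 (fbasis R l) \<in> mod_ideal_prod R T I"
      using hom_fbasis_in_mod_ideal_prod[OF T L1 l I] cokernel_relations(1)[OF coker l I] by simp
  qed
  have L2_image: "?L2 f \<in> mod_ideal_prod R T I" if "f \<in> carrier F'" for f
  proof (rule free_module_hom_into_submodule[OF T L2[unfolded FG'_def] N _ that[unfolded FG'_def]])
    fix l assume "l \<in> Lm - {[]}"
    then have l: "l \<in> Lm" and l_ne: "l \<noteq> []" by auto
    show "?L2 (fbasis R l) \<in> mod_ideal_prod R T I"
      using hom_fbasis_in_mod_ideal_prod[OF T mod_hom_comp[OF projw_hom L2] l I]
        cokernel_relations(2)[OF coker l I]
      by (simp add: projw_fbasis[OF l_ne])
  qed
  obtain y where y: "y \<in> carrier tgt" and t_y: "t = \<pi> y"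
    using t \<pi>_onto by blast
  obtain f f' where "y = (f, f')" by (cases y)
  with y t_y have f: "f \<in> carrier F" and f': "f' \<in> carrier F'" and "t = \<pi> (f, f')"
    by (simp_all add: sigma_tgt_def)
  then have "t = ?L1 f \<oplus>\<^bsub>T\<^esub> ?L2 f'"
    using mod_homD(2)[OF \<pi>, of "(f, \<zero>\<^bsub>F'\<^esub>)" "(\<zero>\<^bsub>F\<^esub>, f')"] by (simp add: sigma_tgt_def)
  then show "t \<in> mod_ideal_prod R T I"
    using submodule_add_closed[OF N L1_image[OF f] L2_image[OF f']] by simp
qed

lemma Div_imp_Gen:
  fixes T :: "('a,'t) module" and X :: "('a,'x) module"
  assumes T: "module R T" and coker: "is_cokernel R src tgt \<sigma> T \<pi>"
    and X: "module R X" and "Div R G X"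
  shows "Gen R T X"
proof (rule Gen_if_covered_by_homs[OF T X])
  interpret X: module R X by fact
  fix x assume x: "x \<in> carrier X"
  have "(\<lambda>_. \<zero>\<^bsub>X\<^esub>) \<in> mod_hom R src X" by (rule mod_homI) simp_all
  then obtain h where h: "h \<in> mod_hom R tgt X" and h_\<sigma>: "\<And>a. a \<in> carrier src \<Longrightarrow> h (\<sigma> a) = \<zero>\<^bsub>X\<^esub>"
    and h_x: "h (fbasis R [], \<zero>\<^bsub>F'\<^esub>) = x"
    using extension_along_sigmaG[OF X \<open>Div R G X\<close> _ x] by blast
  obtain \<phi> where \<phi>: "\<phi> \<in> mod_hom R T X" and \<phi>_\<pi>: "\<And>y. y \<in> carrier tgt \<Longrightarrow> \<phi> (\<pi> y) = h y"
    using cokernel_factor[OF module_tgt T X coker h h_\<sigma>] by blast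
  have y: "(fbasis R [], \<zero>\<^bsub>F'\<^esub>) \<in> carrier tgt"
    using fbasis_F[OF Lam_Nil] zeros_closed(2) by (simp add: sigma_tgt_def)
  have "\<pi> (fbasis R [], \<zero>\<^bsub>F'\<^esub>) \<in> carrier T"
    using coker y unfolding is_cokernel_def by blast
  then show "\<exists>\<phi>\<in>mod_hom R T X. \<exists>t\<in>carrier T. \<phi> t = x"
    using \<phi> \<phi>_\<pi>[OF y] h_x by blast
qed

end

theorem proposition4p6:
  fixes R :: "('a, 'c) ring_scheme"
    and G :: "'a set set"
    and gens :: "'a set \<Rightarrow> 'a list"
    and T :: "('a, 't) module"
    and \<pi> :: "(((('a set \<times> nat) list \<Rightarrow> 'a) \<times> (('a set \<times> nat) list \<Rightarrow> 'a)) \<Rightarrow> 't)"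
  assumes "cring R"
    and "gabriel_filter R G"
    and "finite_type R G"
    and "\<forall>I\<in>fgI R G. set (gens I) \<subseteq> carrier R \<and> Idl\<^bsub>R\<^esub> (set (gens I)) = I"
    and "module R T"
    and "is_cokernel R (sigma_src R G gens) (sigma_tgt R G gens) (sigmaG R G gens) T \<pi>"
  shows "(\<forall>X :: ('a, 'x) module. module R X \<longrightarrow>
            (Gen R T X \<longleftrightarrow> D_class R (sigma_src R G gens) (sigma_tgt R G gens) (sigmaG R G gens) X))
       \<and> (\<forall>X :: ('a, 'x) module. module R X \<longrightarrow> (Gen R T X \<longleftrightarrow> Div R G X))"
proof -
  interpret gabriel_construction R G gens
  proof (rule gabriel_construction.intro)
    show "cring R" by fact
    show "\<And>I. I \<in> G \<Longrightarrow> ideal I R"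
      using assms(2) unfolding gabriel_filter_def ideal_filter_def by blast
    show "finite_type R G" by fact
    show "\<And>I. I \<in> fgI R G \<Longrightarrow> set (gens I) \<subseteq> carrier R" using assms(4) by blast
    show "\<And>I. I \<in> fgI R G \<Longrightarrow> Idl\<^bsub>R\<^esub> (set (gens I)) = I" using assms(4) by blast
  qed
  have Gen_iff_Div: "Gen R T X \<longleftrightarrow> Div R G X" if X: "module R X" for X :: "('a, 'x) module"
    using Div_if_Gen[OF assms(5) X cokernel_Div[OF assms(5,6)] _ G_subset_carrier]
      Div_imp_Gen[OF assms(5,6) X] by (rule iffI)
  show ?thesis
    using Gen_iff_Div Div_iff_D_class by blast
qed

end
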